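(* Let $\Theta\subset\{1,\dots,n\}$ be non-empty. If $\Theta$ contains an odd integer, then the flag manifold $\mathcal F_\Theta$ of $\mathrm{Sp}(2n,\mathbb R)$ has Property (I).
   Context: $Je_i=(-1)^ie_{2n-i+1}$, $\omega(x,y)=x^TJy$, $\mathrm{Sp}(2n,\mathbb R)=\{g:g^TJg=J\}$. $\mathcal F_\Theta$ is the space of isotropic $\Theta$-flags $(V^i)_{i\in\Theta}$ ($V^i$ $\omega$-isotropic, $\dim V^i=i$, nested); flags $V,W$ are antipodal if $V^i\oplus (W^i)^{\perp_\omega}=\mathbb R^{2n}$ for all $i\in\Theta$, and $C(\tau)$ is the set of flags antipodal to $\tau$. $\tau_\Theta^i=\mathrm{Span}\{e_1,\dots,e_i\}$, $(\tau_\Theta^{\rm opp})^i=\mathrm{Span}\{e_{2n},\dots,e_{2n-i+1}\}$; $U_\Theta$ is the unipotent radical of the stabilizer $P_\Theta$ of $\tau_\Theta$, and each $\tau\in C(\tau_\Theta)$ is uniquely $u_\tau\tau^{\rm opp}_\Theta$ with $u_\tau\in U_\Theta$. The inversion map $\iota:C(\tau_\Theta)\to C(\tau_\Theta)$ is $\iota(\tau)=u_\tau^{-1}\tau^{\rm opp}_\Theta$; it preserves $C(\tau_\Theta)\cap C(\tau^{\rm opp}_\Theta)$. $\mathcal F_\Theta$ has Property (I) if $\iota$ leaves no connected component of $C(\tau_\Theta)\cap C(\tau^{\rm opp}_\Theta)$ invariant. *)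

theory Defs
  imports "HOL-Analysis.Analysis"
begin

text \<open>Vectors of R^m are functions nat => real supported on {1..m};
  m x m matrices are functions nat => nat => real supported on {1..m} x {1..m}.
  Throughout, m = 2n.\<close>

type_synonym vect = "nat \<Rightarrow> real"
type_synonym matr = "nat \<Rightarrow> nat \<Rightarrow> real"

definition Rn :: "nat \<Rightarrow> vect set" where
  "Rn m = {x. \<forall>k. k \<notin> {1..m} \<longrightarrow> x k = 0}"

definition Mats :: "nat \<Rightarrow> matr set" where
  "Mats m = {A. \<forall>i j. (i \<notin> {1..m} \<or> j \<notin> {1..m}) \<longrightarrow> A i j = 0}"

definition vzero :: vect where "vzero = (\<lambda>k. 0)"
definition vadd :: "vect \<Rightarrow> vect \<Rightarrow> vect" where "vadd x y = (\<lambda>k. x k + y k)"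
definition vsub :: "vect \<Rightarrow> vect \<Rightarrow> vect" where "vsub x y = (\<lambda>k. x k - y k)"

definition ev :: "nat \<Rightarrow> vect" where "ev i = (\<lambda>k. if k = i then 1 else 0)"

definition lin_comb :: "(nat \<Rightarrow> real) \<Rightarrow> vect list \<Rightarrow> vect" where
  "lin_comb c vs = (\<lambda>k. \<Sum>j<length vs. c j * (vs ! j) k)"

definition lspan :: "vect list \<Rightarrow> vect set" where
  "lspan vs = {lin_comb c vs | c. True}"

definition lin_indep :: "vect list \<Rightarrow> bool" where
  "lin_indep vs \<longleftrightarrow> (\<forall>c. lin_comb c vs = vzero \<longrightarrow> (\<forall>j<length vs. c j = 0))"

definition subspace_dim :: "nat \<Rightarrow> vect set \<Rightarrow> nat \<Rightarrow> bool" where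
  "subspace_dim m W d \<longleftrightarrow>
     (\<exists>vs. length vs = d \<and> set vs \<subseteq> Rn m \<and> lin_indep vs \<and> lspan vs = W)"

definition mvec :: "nat \<Rightarrow> matr \<Rightarrow> vect \<Rightarrow> vect" where
  "mvec m A x = (\<lambda>i. \<Sum>k\<in>{1..m}. A i k * x k)"

definition mmul :: "nat \<Rightarrow> matr \<Rightarrow> matr \<Rightarrow> matr" where
  "mmul m A B = (\<lambda>i j. \<Sum>k\<in>{1..m}. A i k * B k j)"

definition mtrans :: "matr \<Rightarrow> matr" where "mtrans A = (\<lambda>i j. A j i)"

definition idm :: "nat \<Rightarrow> matr" where
  "idm m = (\<lambda>i j. if i = j \<and> i \<in> {1..m} then 1 else 0)"

definition minv :: "nat \<Rightarrow> matr \<Rightarrow> matr" where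
  "minv m A = (THE B. B \<in> Mats m \<and> mmul m B A = idm m \<and> mmul m A B = idm m)"

definition Jm :: "nat \<Rightarrow> matr" where
  "Jm n = (\<lambda>a i. if a \<in> {1..2*n} \<and> i \<in> {1..2*n} \<and> a + i = 2*n + 1
                  then (-1::real) ^ i else 0)"

definition omega :: "nat \<Rightarrow> vect \<Rightarrow> vect \<Rightarrow> real" where
  "omega n x y = (\<Sum>a\<in>{1..2*n}. x a * mvec (2*n) (Jm n) y a)"

definition Sp :: "nat \<Rightarrow> matr set" where
  "Sp n = {g \<in> Mats (2*n). mmul (2*n) (mtrans g) (mmul (2*n) (Jm n) g) = Jm n}"

definition isotropic :: "nat \<Rightarrow> vect set \<Rightarrow> bool" where
  "isotropic n W \<longleftrightarrow> (\<forall>x\<in>W. \<forall>y\<in>W. omega n x y = 0)"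

definition omega_perp :: "nat \<Rightarrow> vect set \<Rightarrow> vect set" where
  "omega_perp n W = {y \<in> Rn (2*n). \<forall>x\<in>W. omega n x y = 0}"

text \<open>A Theta-flag is a map i |-> V^i, with V^i = {} for i not in Theta.\<close>
type_synonym flag = "nat \<Rightarrow> vect set"

definition iso_flags :: "nat \<Rightarrow> nat set \<Rightarrow> flag set" where
  "iso_flags n \<Theta> = {V.
      (\<forall>i\<in>\<Theta>. subspace_dim (2*n) (V i) i \<and> isotropic n (V i)) \<and>
      (\<forall>i\<in>\<Theta>. \<forall>j\<in>\<Theta>. i \<le> j \<longrightarrow> V i \<subseteq> V j) \<and>
      (\<forall>i. i \<notin> \<Theta> \<longrightarrow> V i = {})}"

definition direct_sum_eq :: "nat \<Rightarrow> vect set \<Rightarrow> vect set \<Rightarrow> bool" where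
  "direct_sum_eq m A B \<longleftrightarrow> {vadd x y | x y. x \<in> A \<and> y \<in> B} = Rn m \<and> A \<inter> B = {vzero}"

definition antipodal :: "nat \<Rightarrow> nat set \<Rightarrow> flag \<Rightarrow> flag \<Rightarrow> bool" where
  "antipodal n \<Theta> V W \<longleftrightarrow> (\<forall>i\<in>\<Theta>. direct_sum_eq (2*n) (V i) (omega_perp n (W i)))"

definition Cset :: "nat \<Rightarrow> nat set \<Rightarrow> flag \<Rightarrow> flag set" where
  "Cset n \<Theta> \<tau> = {V \<in> iso_flags n \<Theta>. antipodal n \<Theta> V \<tau>}"

definition tau :: "nat set \<Rightarrow> flag" where
  "tau \<Theta> = (\<lambda>i. if i \<in> \<Theta> then lspan (map ev [1..<i+1]) else {})"

definition tau_opp :: "nat \<Rightarrow> nat set \<Rightarrow> flag" where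
  "tau_opp n \<Theta> = (\<lambda>i. if i \<in> \<Theta> then lspan (map ev [2*n-i+1..<2*n+1]) else {})"

definition act :: "nat \<Rightarrow> matr \<Rightarrow> flag \<Rightarrow> flag" where
  "act n g V = (\<lambda>i. mvec (2*n) g ` V i)"

text \<open>Unipotent radical of the stabilizer P_Theta of tau_Theta: the elements of Sp(2n)
  preserving the filtration
  0 < tau^(t1) < ... < tau^(tk) < (tau^(tk))^perp < ... < (tau^(t1))^perp < R^2n
  and acting trivially on its successive quotients.  Here (tau^i)^perp = span(e_1..e_(2n-i)).\<close>
definition Estd :: "nat \<Rightarrow> vect set" where
  "Estd k = lspan (map ev [1..<k+1])"

definition filt_idx :: "nat \<Rightarrow> nat set \<Rightarrow> nat set" where
  "filt_idx n \<Theta> = {0, 2*n} \<union> \<Theta> \<union> (\<lambda>k. 2*n - k) ` \<Theta>"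

definition U_Theta :: "nat \<Rightarrow> nat set \<Rightarrow> matr set" where
  "U_Theta n \<Theta> = {g \<in> Sp n. \<forall>k\<in>filt_idx n \<Theta>. \<forall>k'\<in>filt_idx n \<Theta>.
      (k < k' \<and> (\<forall>m\<in>filt_idx n \<Theta>. \<not> (k < m \<and> m < k'))) \<longrightarrow>
      (\<forall>v\<in>Estd k'. vsub (mvec (2*n) g v) v \<in> Estd k)}"

definition u_of :: "nat \<Rightarrow> nat set \<Rightarrow> flag \<Rightarrow> matr" where
  "u_of n \<Theta> V = (THE u. u \<in> U_Theta n \<Theta> \<and> act n u (tau_opp n \<Theta>) = V)"

definition iota :: "nat \<Rightarrow> nat set \<Rightarrow> flag \<Rightarrow> flag" where
  "iota n \<Theta> V = act n (minv (2*n) (u_of n \<Theta> V)) (tau_opp n \<Theta>)"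

text \<open>Topology: a subspace is identified with its orthogonal projection matrix
  (standard embedding of the Grassmannian); a flag with the tuple of these.\<close>
definition vinner :: "nat \<Rightarrow> vect \<Rightarrow> vect \<Rightarrow> real" where
  "vinner m x y = (\<Sum>k\<in>{1..m}. x k * y k)"

definition projm :: "nat \<Rightarrow> vect set \<Rightarrow> matr" where
  "projm m W = (THE P. P \<in> Mats m \<and>
      (\<forall>x\<in>Rn m. mvec m P x \<in> W \<and> (\<forall>w\<in>W. vinner m (vsub x (mvec m P x)) w = 0)))"

definition flag_embed :: "nat \<Rightarrow> nat set \<Rightarrow> flag \<Rightarrow> (nat \<Rightarrow> matr)" where
  "flag_embed n \<Theta> V = (\<lambda>i. if i \<in> \<Theta> then projm (2*n) (V i) else (\<lambda>a b. 0))"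

definition flag_top :: "nat \<Rightarrow> nat set \<Rightarrow> flag topology" where
  "flag_top n \<Theta> = pullback_topology (iso_flags n \<Theta>) (flag_embed n \<Theta>) euclidean"

definition Property_I :: "nat \<Rightarrow> nat set \<Rightarrow> bool" where
  "Property_I n \<Theta> \<longleftrightarrow>
     (\<forall>K \<in> connected_components_of
            (subtopology (flag_top n \<Theta>) (Cset n \<Theta> (tau \<Theta>) \<inter> Cset n \<Theta> (tau_opp n \<Theta>))).
        iota n \<Theta> ` K \<noteq> K)"

end

(* For a flag V antipodal to tau, the element u_V of U_Theta with V = u_V tau_opp is upper
   unitriangular, and iota(V) = u_V^-1 tau_opp where u_V^-1 = J^-1 u_V^T J.  Fix an odd k in Theta
   and, for a flag W, let T(W) and B(W) be the k x k blocks of the orthogonal projection onto W^k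
   formed by its last k columns and its first resp. last k rows.  The function
   Phi(W) = det T(W) * det B(W) is continuous, and it vanishes nowhere on C(tau) meet C(tau_opp)
   because there W^k is transverse to both coordinate complements.  If W^k = g tau_opp^k, then
   Phi(W) = det T(g) * det B(g) * (det Q)^2 for some Q, with T(g), B(g) the corresponding blocks
   of g.  For unitriangular u one has det B(u) = 1, and T(u^-1) is minus a signed anti-transpose
   of T(u), so det T(u^-1) = (-1)^k det T(u) = - det T(u).  Hence Phi(V) and Phi(iota V) have
   opposite signs, whereas Phi has constant sign on each connected component. *)

theory Submission
  imports Defs "Jordan_Normal_Form.Determinant"
begin

section \<open>Coordinate subspaces\<close>

definition supported_on :: "nat set \<Rightarrow> vect set" where
  "supported_on S = {x. \<forall>c. c \<notin> S \<longrightarrow> x c = 0}"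

lemma supported_on_iff: "x \<in> supported_on S \<longleftrightarrow> (\<forall>c. c \<notin> S \<longrightarrow> x c = 0)"
  by (simp add: supported_on_def)

lemma supported_on_mono: "S \<subseteq> S' \<Longrightarrow> supported_on S \<subseteq> supported_on S'"
  by (auto simp: supported_on_def)

lemma ev_in_supported_on: "c \<in> S \<Longrightarrow> ev c \<in> supported_on S"
  by (auto simp: supported_on_def ev_def)

lemma lin_comb_map: "lin_comb c (map f [a..<b]) k = (\<Sum>j<b-a. c j * f (a+j) k)"
  unfolding lin_comb_def by (auto intro!: sum.cong)

lemma sum_times_ev:
  "finite S \<Longrightarrow> (\<Sum>c\<in>S. x c * ev c k) = (if k \<in> S then x k else 0)"
  by (simp add: ev_def if_distrib cong: if_cong)

lemma lspan_ev_upt: "lspan (map ev [a..<b]) = supported_on {a..<b}"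
proof (intro equalityI subsetI)
  fix x assume "x \<in> lspan (map ev [a..<b])"
  then obtain c where x: "x = lin_comb c (map ev [a..<b])" unfolding lspan_def by auto
  show "x \<in> supported_on {a..<b}" unfolding supported_on_iff x lin_comb_map
    by (auto simp: ev_def intro!: sum.neutral)
next
  fix x assume x: "x \<in> supported_on {a..<b}"
  have "x = lin_comb (\<lambda>j. x (a+j)) (map ev [a..<b])"
  proof
    fix k
    have "lin_comb (\<lambda>j. x (a+j)) (map ev [a..<b]) k = (\<Sum>j<b-a. x (a+j) * ev (a+j) k)"
      by (simp add: lin_comb_map)
    also have "\<dots> = (\<Sum>c\<in>{a..<b}. x c * ev c k)"
      by (rule sum.reindex_bij_witness[of _ "\<lambda>c. c - a" "\<lambda>j. a + j"]) auto
    also have "(\<Sum>c\<in>{a..<b}. x c * ev c k) = x k"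
      using x by (auto simp: sum_times_ev supported_on_iff)
    finally show "x k = lin_comb (\<lambda>j. x (a+j)) (map ev [a..<b]) k" by simp
  qed
  then show "x \<in> lspan (map ev [a..<b])" unfolding lspan_def by blast
qed

lemma minus_ev_supported_onD:
  assumes "(\<lambda>k. y k - ev c k) \<in> supported_on {1..p}" "p < c"
  shows "y \<in> supported_on {1..c}" "y c = 1"
proof -
  have y: "y k = (if k = c then 1 else 0)" if "k \<notin> {1..p}" for k
    using assms(1) that unfolding supported_on_def ev_def by auto
  show "y c = 1" using y[of c] assms(2) by auto
  show "y \<in> supported_on {1..c}" unfolding supported_on_iff
  proof (intro allI impI)
    fix k assume "k \<notin> {1..c}"
    then show "y k = 0" using y[of k] assms(2) by (cases "k = c") auto
  qed
qed

lemma Rn_eq_supported_on: "Rn m = supported_on {1..m}"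
  by (auto simp: Rn_def supported_on_def)

lemma Estd_eq_supported_on: "Estd k = supported_on {1..k}"
  unfolding Estd_def lspan_ev_upt by (auto simp: supported_on_def)

lemma tau_eq_supported_on: "i \<in> \<Theta> \<Longrightarrow> tau \<Theta> i = supported_on {1..i}"
  unfolding tau_def lspan_ev_upt by (auto simp: supported_on_def)

lemma tau_opp_eq_supported_on: "i \<in> \<Theta> \<Longrightarrow> tau_opp n \<Theta> i = supported_on {2*n-i+1..2*n}"
  unfolding tau_opp_def lspan_ev_upt by (auto simp: supported_on_def)

definition lin_subspace :: "vect set \<Rightarrow> bool" where
  "lin_subspace W \<longleftrightarrow> vzero \<in> W \<and> (\<forall>x\<in>W. \<forall>y\<in>W. (\<lambda>k. x k + y k) \<in> W) \<and>
     (\<forall>a. \<forall>x\<in>W. (\<lambda>k. a * x k) \<in> W)"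

lemma lin_subspaceD:
  assumes "lin_subspace W"
  shows "(\<lambda>k. 0) \<in> W" "x \<in> W \<Longrightarrow> y \<in> W \<Longrightarrow> (\<lambda>k. x k + y k) \<in> W"
    "x \<in> W \<Longrightarrow> (\<lambda>k. a * x k) \<in> W"
  using assms unfolding lin_subspace_def vzero_def by auto

lemma lin_subspace_diff:
  assumes "lin_subspace W" "x \<in> W" "y \<in> W"
  shows "(\<lambda>k. x k - y k) \<in> W"
  using lin_subspaceD(2)[OF assms(1,2) lin_subspaceD(3)[OF assms(1,3), of "-1"]] by simp

lemma lin_subspace_sum:
  assumes "lin_subspace W" "finite I" "\<And>i. i \<in> I \<Longrightarrow> f i \<in> W"
  shows "(\<lambda>k. \<Sum>i\<in>I. c i * f i k) \<in> W"
  using assms(2,3)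
proof (induction I rule: finite_induct)
  case empty then show ?case using lin_subspaceD(1)[OF assms(1)] by simp
next
  case (insert i I)
  have "(\<lambda>k. c i * f i k) \<in> W" using insert lin_subspaceD(3)[OF assms(1)] by auto
  from lin_subspaceD(2)[OF assms(1) this] insert show ?case by auto
qed

lemma lin_subspace_supported_on: "lin_subspace (supported_on S)"
  by (auto simp: lin_subspace_def supported_on_def vzero_def)

lemma lin_subspace_lspan: "lin_subspace (lspan vs)"
proof -
  have "vzero = lin_comb (\<lambda>_. 0) vs" by (auto simp: lin_comb_def vzero_def)
  moreover have "(\<lambda>k. lin_comb c vs k + lin_comb d vs k) = lin_comb (\<lambda>j. c j + d j) vs" for c d
    by (auto simp: lin_comb_def sum.distrib algebra_simps)
  moreover have "(\<lambda>k. a * lin_comb c vs k) = lin_comb (\<lambda>j. a * c j) vs" for a c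
    by (auto simp: lin_comb_def sum_distrib_left algebra_simps)
  ultimately show ?thesis unfolding lin_subspace_def lspan_def by blast
qed

lemma lspan_subset_Rn:
  assumes "set vs \<subseteq> Rn m"
  shows "lspan vs \<subseteq> Rn m"
proof
  fix x assume "x \<in> lspan vs"
  then obtain c where x: "x = lin_comb c vs" unfolding lspan_def by auto
  have "(\<lambda>k. \<Sum>j\<in>{..<length vs}. c j * (vs ! j) k) \<in> supported_on {1..m}"
    by (rule lin_subspace_sum[OF lin_subspace_supported_on])
       (use assms in \<open>auto simp: Rn_eq_supported_on\<close>)
  then show "x \<in> Rn m" unfolding x lin_comb_def Rn_eq_supported_on by simp
qed

lemma direct_sum_eqD:
  assumes "direct_sum_eq m A B"
  shows "\<And>x. x \<in> Rn m \<Longrightarrow> \<exists>a\<in>A. \<exists>b\<in>B. x = (\<lambda>k. a k + b k)"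
    "\<And>x. x \<in> A \<Longrightarrow> x \<in> B \<Longrightarrow> x = (\<lambda>k. 0)"
  using assms unfolding direct_sum_eq_def vadd_def vzero_def by (auto simp: set_eq_iff) blast+

lemma mvec_ev: "c \<in> {1..m} \<Longrightarrow> mvec m u (ev c) = (\<lambda>i. u i c)"
proof
  fix i assume c: "c \<in> {1..m}"
  have "mvec m u (ev c) i = (\<Sum>k\<in>{1..m}. if k = c then u i k else 0)"
    unfolding mvec_def by (rule sum.cong) (auto simp: ev_def)
  then show "mvec m u (ev c) i = u i c" using c by (simp add: sum.delta)
qed

lemma mvec_zero: "mvec m u (\<lambda>k. 0) = (\<lambda>k. 0)"
  unfolding mvec_def by simp

lemma mvec_supported_on:
  assumes "x \<in> supported_on S" "S \<subseteq> {1..m}"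
  shows "mvec m u x = (\<lambda>i. \<Sum>c\<in>S. x c * u i c)"
proof
  fix i
  have "mvec m u x i = (\<Sum>c\<in>{1..m}. x c * u i c)" by (simp add: mvec_def mult.commute)
  also have "\<dots> = (\<Sum>c\<in>S. x c * u i c)"
    by (rule sum.mono_neutral_right) (use assms in \<open>auto simp: supported_on_def\<close>)
  finally show "mvec m u x i = (\<Sum>c\<in>S. x c * u i c)" .
qed

lemma mvec_add_ev:
  assumes "c \<in> {1..m}"
  shows "mvec m u (\<lambda>k. w k + a * ev c k) = (\<lambda>i. mvec m u w i + a * u i c)"
proof -
  have "mvec m u (\<lambda>k. w k + a * ev c k) = (\<lambda>i. mvec m u w i + a * mvec m u (ev c) i)"
    unfolding mvec_def by (auto simp: algebra_simps sum.distrib sum_distrib_left)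
  then show ?thesis using mvec_ev[OF assms] by simp
qed

section \<open>The symplectic form\<close>

lemma minus_one_power_odd_sum: "odd (a + b) \<Longrightarrow> (-1::real)^a = - ((-1)^b)"
  by (auto simp: minus_one_power_iff)

lemma minus_one_power_even_sum: "even (a + b) \<Longrightarrow> (-1::real)^a = (-1)^b"
  by (auto simp: minus_one_power_iff)

lemma Jm_eq: "Jm n a k = (if a \<in> {1..2*n} \<and> k = 2*n+1-a then (-1)^k else 0)"
  unfolding Jm_def by auto

lemma omega_explicit: "omega n x y = (\<Sum>a\<in>{1..2*n}. (-1)^(2*n+1-a) * x a * y (2*n+1-a))"
proof -
  have "mvec (2*n) (Jm n) y a = (if a \<in> {1..2*n} then (-1)^(2*n+1-a) * y (2*n+1-a) else 0)" for a
  proof -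
    have "mvec (2*n) (Jm n) y a =
        (\<Sum>k\<in>{1..2*n}. (if a \<in> {1..2*n} \<and> k = 2*n+1-a then (-1)^k * y k else 0))"
      unfolding mvec_def Jm_eq by (auto intro!: sum.cong)
    also have "\<dots> = (if a \<in> {1..2*n} then (-1)^(2*n+1-a) * y (2*n+1-a) else 0)"
      by (cases "a \<in> {1..2*n}") (auto simp: sum.delta)
    finally show ?thesis .
  qed
  then show ?thesis unfolding omega_def by (auto intro!: sum.cong)
qed

lemma omega_explicit': "omega n x y = (\<Sum>k\<in>{1..2*n}. (-1)^k * x (2*n+1-k) * y k)"
  unfolding omega_explicit
  by (rule sum.reindex_bij_witness[of _ "\<lambda>b. 2*n+1-b" "\<lambda>a. 2*n+1-a"]) auto

lemma omega_ev_left: "i \<in> {1..2*n} \<Longrightarrow> omega n (ev i) y = (-1)^(2*n+1-i) * y (2*n+1-i)"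
proof -
  assume i: "i \<in> {1..2*n}"
  have "omega n (ev i) y = (\<Sum>a\<in>{1..2*n}. if a = i then (-1)^(2*n+1-a) * y (2*n+1-a) else 0)"
    unfolding omega_explicit by (rule sum.cong) (auto simp: ev_def)
  also have "\<dots> = (-1)^(2*n+1-i) * y (2*n+1-i)" using i by (simp add: sum.delta)
  finally show ?thesis .
qed

lemma omega_ev_left_out: "i \<notin> {1..2*n} \<Longrightarrow> omega n (ev i) y = 0"
  unfolding omega_explicit by (auto simp: ev_def intro!: sum.neutral)

lemma Jm_eq_omega_ev: "Jm n i j = omega n (ev i) (ev j)"
proof (cases "i \<in> {1..2*n}")
  case True
  then show ?thesis by (simp add: omega_ev_left) (auto simp: Jm_eq ev_def)
next
  case False
  then show ?thesis by (simp add: omega_ev_left_out) (auto simp: Jm_eq)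
qed

lemma omega_antisym: "omega n x y = - omega n y x"
proof -
  have "omega n y x = (\<Sum>b\<in>{1..2*n}. (-1)^b * y (2*n+1-b) * x b)"
    by (rule omega_explicit')
  also have "\<dots> = (\<Sum>b\<in>{1..2*n}. - ((-1)^(2*n+1-b) * x b * y (2*n+1-b)))"
  proof (rule sum.cong)
    fix b assume "b \<in> {1..2*n}"
    then have "(-1::real)^b = - ((-1)^(2*n+1-b))" by (intro minus_one_power_odd_sum) auto
    then show "(-1)^b * y (2*n+1-b) * x b = - ((-1)^(2*n+1-b) * x b * y (2*n+1-b))" by simp
  qed simp
  also have "\<dots> = - omega n x y" unfolding omega_explicit by (simp add: sum_negf)
  finally show ?thesis by simp
qed

lemma omega_add_left: "omega n (\<lambda>k. x k + y k) z = omega n x z + omega n y z"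
  unfolding omega_explicit by (simp add: algebra_simps sum.distrib)

lemma omega_diff_left: "omega n (\<lambda>k. x k - y k) z = omega n x z - omega n y z"
  unfolding omega_explicit by (simp add: algebra_simps sum_subtractf)

lemma omega_scale_left: "omega n (\<lambda>k. a * x k) z = a * omega n x z"
  unfolding omega_explicit by (simp add: algebra_simps sum_distrib_left)

lemma omega_add_right: "omega n z (\<lambda>k. x k + y k) = omega n z x + omega n z y"
  by (subst (1 2 3) omega_antisym) (simp add: omega_add_left)

lemma omega_zero_left: "omega n (\<lambda>k. 0) y = 0"
  unfolding omega_explicit by simp

lemma omega_zero_right: "omega n x (\<lambda>k. 0) = 0"
  unfolding omega_explicit by simp

lemma omega_supported_eq_0:
  assumes "x \<in> supported_on S" "y \<in> supported_on S'"
    and "\<And>a. a \<in> S \<Longrightarrow> a \<in> {1..2*n} \<Longrightarrow> 2*n+1-a \<notin> S'"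
  shows "omega n x y = 0"
  unfolding omega_explicit
proof (rule sum.neutral, rule ballI)
  fix a assume a: "a \<in> {1..2*n}"
  show "(-1)^(2*n+1-a) * x a * y (2*n+1-a) = 0"
  proof (cases "a \<in> S")
    case True then show ?thesis using assms a by (auto simp: supported_on_def)
  next
    case False then show ?thesis using assms by (auto simp: supported_on_def)
  qed
qed

lemma omega_perp_supported_on:
  assumes "\<And>c. c \<in> {1..2*n} \<Longrightarrow> c \<in> T \<longleftrightarrow> 2*n+1-c \<notin> S" "T \<subseteq> {1..2*n}"
  shows "omega_perp n (supported_on S) = supported_on T"
proof (intro equalityI subsetI)
  fix y assume "y \<in> omega_perp n (supported_on S)"
  then have y: "y \<in> supported_on {1..2*n}" "\<And>x. x \<in> supported_on S \<Longrightarrow> omega n x y = 0"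
    unfolding omega_perp_def Rn_eq_supported_on by auto
  show "y \<in> supported_on T" unfolding supported_on_iff
  proof (intro allI impI)
    fix c assume c: "c \<notin> T"
    show "y c = 0"
    proof (cases "c \<in> {1..2*n}")
      case False then show ?thesis using y(1) by (auto simp: supported_on_def)
    next
      case True
      define a where "a = 2*n+1-c"
      have a: "a \<in> S" "a \<in> {1..2*n}" "2*n+1-a = c" using assms(1) c True by (auto simp: a_def)
      have "omega n (ev a) y = 0" using y(2)[OF ev_in_supported_on[OF a(1)]] .
      then show ?thesis using a by (simp add: omega_ev_left)
    qed
  qed
next
  fix y assume y: "y \<in> supported_on T"
  then have "y \<in> Rn (2*n)" using supported_on_mono[OF assms(2)] by (auto simp: Rn_eq_supported_on)
  moreover have "omega n x y = 0" if "x \<in> supported_on S" for x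
  proof (rule omega_supported_eq_0[OF that y])
    fix a assume a: "a \<in> S" "a \<in> {1..2*n}"
    then have "2*n+1-a \<in> {1..2*n}" "2*n+1-(2*n+1-a) = a" by auto
    then show "2*n+1-a \<notin> T" using assms(1)[of "2*n+1-a"] a(1) by simp
  qed
  ultimately show "y \<in> omega_perp n (supported_on S)" unfolding omega_perp_def by auto
qed

lemma omega_perp_initial: "i \<le> n \<Longrightarrow> omega_perp n (supported_on {1..i}) = supported_on {1..2*n-i}"
  by (rule omega_perp_supported_on) auto

lemma omega_perp_final:
  "i \<le> n \<Longrightarrow> omega_perp n (supported_on {2*n-i+1..2*n}) = supported_on {i+1..2*n}"
  by (rule omega_perp_supported_on) auto

lemma Sp_iff_columns:
  assumes "g \<in> Mats (2*n)"
  shows "g \<in> Sp n \<longleftrightarrow>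
    (\<forall>i\<in>{1..2*n}. \<forall>j\<in>{1..2*n}. omega n (\<lambda>a. g a i) (\<lambda>a. g a j) = omega n (ev i) (ev j))"
proof -
  have entry: "mmul (2*n) (mtrans g) (mmul (2*n) (Jm n) g) i j =
      omega n (\<lambda>a. g a i) (\<lambda>a. g a j)" for i j
    unfolding mmul_def mtrans_def omega_def mvec_def by (simp add: sum_distrib_left)
  have out: "omega n (\<lambda>a. g a i) (\<lambda>a. g a j) = 0 \<and> omega n (ev i) (ev j) = 0"
    if "i \<notin> {1..2*n} \<or> j \<notin> {1..2*n}" for i j
  proof -
    have col0: "(\<lambda>a. g a l) = (\<lambda>a. 0)" if "l \<notin> {1..2*n}" for l
      using assms that unfolding Mats_def by auto
    from that show ?thesis
    proof
      assume i: "i \<notin> {1..2*n}"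
      show ?thesis using col0[OF i] omega_ev_left_out[OF i] by (simp add: omega_zero_left)
    next
      assume j: "j \<notin> {1..2*n}"
      show ?thesis
        using col0[OF j] omega_ev_left_out[OF j] omega_antisym[of n "ev i"]
        by (simp add: omega_zero_right)
    qed
  qed
  have "g \<in> Sp n \<longleftrightarrow> (\<forall>i j. omega n (\<lambda>a. g a i) (\<lambda>a. g a j) = omega n (ev i) (ev j))"
    unfolding Sp_def using assms by (auto simp: fun_eq_iff entry Jm_eq_omega_ev)
  also have "\<dots> \<longleftrightarrow>
      (\<forall>i\<in>{1..2*n}. \<forall>j\<in>{1..2*n}. omega n (\<lambda>a. g a i) (\<lambda>a. g a j) = omega n (ev i) (ev j))"
  proof (intro iffI allI ballI)
    fix i j
    assume "\<forall>i\<in>{1..2*n}. \<forall>j\<in>{1..2*n}. omega n (\<lambda>a. g a i) (\<lambda>a. g a j) = omega n (ev i) (ev j)"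
    then show "omega n (\<lambda>a. g a i) (\<lambda>a. g a j) = omega n (ev i) (ev j)"
      using out[of i j] by (cases "i \<in> {1..2*n} \<and> j \<in> {1..2*n}") auto
  qed auto
  finally show ?thesis .
qed

text \<open>Since \<open>\<omega>(e\<^sub>a, e\<^sub>b) \<noteq> 0\<close> only for \<open>a + b = 2n + 1\<close>, the following systems are triangular
  with diagonal entries \<open>\<plusminus>1\<close>.\<close>

lemma omega_triangular_solve:
  assumes "q \<le> n" "\<And>b. b \<in> {2*n+1-q..2*n} \<Longrightarrow> fb b \<in> supported_on {1..b} \<and> fb b b = 1"
  shows "\<exists>z\<in>supported_on {1..q}. \<forall>b\<in>{2*n+1-q..2*n}. omega n z (fb b) = r b"
  using assms
proof (induction q arbitrary: r)
  case 0
  show ?case by (rule bexI[of _ "\<lambda>k. 0"]) (auto simp: supported_on_def)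
next
  case (Suc q)
  define b0 where "b0 = 2*n - q"
  have b0: "b0 \<in> {2*n+1-Suc q..2*n}" "1 \<le> b0" using Suc.prems(1) by (auto simp: b0_def)
  have fb0: "fb b0 \<in> supported_on {1..b0}" "fb b0 b0 = 1" using Suc.prems(2)[OF b0(1)] by auto
  have qin: "Suc q \<in> {1..2*n}" using Suc.prems(1) by auto
  have cdef: "omega n (ev (Suc q)) (fb b0) = (-1)^(2*n+1-Suc q)"
    using omega_ev_left[OF qin] fb0 by (simp add: b0_def)
  define t where "t = r b0 / (-1)^(2*n+1-Suc q)"
  define r' where "r' b = r b - t * omega n (ev (Suc q)) (fb b)" for b
  have "\<exists>z\<in>supported_on {1..q}. \<forall>b\<in>{2*n+1-q..2*n}. omega n z (fb b) = r' b"
    by (rule Suc.IH) (use Suc.prems in auto)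
  then obtain z0 where z0: "z0 \<in> supported_on {1..q}" "\<forall>b\<in>{2*n+1-q..2*n}. omega n z0 (fb b) = r' b"
    by blast
  define z where "z = (\<lambda>k. z0 k + t * ev (Suc q) k)"
  have zS: "z \<in> supported_on {1..Suc q}" using z0(1) by (auto simp: z_def supported_on_def ev_def)
  have oz: "omega n z (fb b) = omega n z0 (fb b) + t * omega n (ev (Suc q)) (fb b)" for b
    unfolding z_def by (simp add: omega_add_left omega_scale_left)
  have z00: "omega n z0 (fb b0) = 0"
    by (rule omega_supported_eq_0[OF z0(1) fb0(1)]) (auto simp: b0_def)
  show ?case
  proof (rule bexI[OF _ zS], rule ballI)
    fix b assume b: "b \<in> {2*n+1-Suc q..2*n}"
    show "omega n z (fb b) = r b"
    proof (cases "b = b0")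
      case True then show ?thesis using oz[of b0] z00 cdef by (simp add: t_def)
    next
      case False
      then have "b \<in> {2*n+1-q..2*n}" using b by (auto simp: b0_def)
      then show ?thesis using oz[of b] z0(2) by (simp add: r'_def)
    qed
  qed
qed

lemma omega_triangular_unique:
  assumes "q \<le> n" "\<And>b. b \<in> {2*n+1-q..2*n} \<Longrightarrow> fb b \<in> supported_on {1..b} \<and> fb b b = 1"
    "z \<in> supported_on {1..q}" "\<forall>b\<in>{2*n+1-q..2*n}. omega n z (fb b) = 0"
  shows "z = (\<lambda>k. 0)"
  using assms
proof (induction q arbitrary: z)
  case 0 then show ?case by (auto simp: supported_on_def)
next
  case (Suc q)
  define b0 where "b0 = 2*n - q"
  have b0: "b0 \<in> {2*n+1-Suc q..2*n}" using Suc.prems(1) by (auto simp: b0_def)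
  have fb0: "fb b0 \<in> supported_on {1..b0}" "fb b0 b0 = 1" using Suc.prems(2)[OF b0] by auto
  define z0 where "z0 = (\<lambda>k. if k = Suc q then 0 else z k)"
  have z0S: "z0 \<in> supported_on {1..q}" using Suc.prems(3) by (auto simp: z0_def supported_on_def)
  have zeq: "z = (\<lambda>k. z0 k + z (Suc q) * ev (Suc q) k)" by (auto simp: z0_def ev_def)
  have qin: "Suc q \<in> {1..2*n}" using Suc.prems(1) by auto
  have cdef: "omega n (ev (Suc q)) (fb b0) = (-1)^(2*n+1-Suc q)"
    using omega_ev_left[OF qin] fb0 by (simp add: b0_def)
  have z00: "omega n z0 (fb b0) = 0"
    by (rule omega_supported_eq_0[OF z0S fb0(1)]) (auto simp: b0_def)
  have oz: "omega n z (fb b) = omega n z0 (fb b) + z (Suc q) * omega n (ev (Suc q)) (fb b)" for b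
    by (subst zeq) (simp add: omega_add_left omega_scale_left)
  have "omega n z (fb b0) = 0" using Suc.prems(4) b0 by auto
  then have zq: "z (Suc q) = 0" using oz[of b0] z00 cdef by simp
  have "z0 = (\<lambda>k. 0)"
  proof (rule Suc.IH)
    show "\<forall>b\<in>{2*n+1-q..2*n}. omega n z0 (fb b) = 0"
      using Suc.prems(4) oz zq by auto
  qed (use Suc.prems z0S in auto)
  then show ?case using zeq zq by simp
qed


lemma unitriangular_span_fill:
  assumes q: "q \<le> 2*n"
    and ucol: "\<And>c. c \<in> {1..2*n} \<Longrightarrow> (\<lambda>k. u k c) \<in> supported_on {1..c} \<and> u c c = 1"
  shows "p \<le> 2*n \<Longrightarrow> x \<in> supported_on {1..p} \<Longrightarrow>
    \<exists>w\<in>supported_on {q+1..2*n}. (\<lambda>k. x k - mvec (2*n) u w k) \<in> supported_on {1..q}"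
proof (induction p arbitrary: x)
  case 0
  then have "x = (\<lambda>k. 0)" by (auto simp: supported_on_def)
  then show ?case by (intro bexI[of _ "\<lambda>k. 0"]) (auto simp: supported_on_def mvec_zero)
next
  case (Suc p)
  show ?case
  proof (cases "Suc p \<le> q")
    case True
    then have "x \<in> supported_on {1..q}"
      using Suc.prems supported_on_mono[of "{1..Suc p}" "{1..q}"] by auto
    then show ?thesis by (intro bexI[of _ "\<lambda>k. 0"]) (auto simp: supported_on_def mvec_zero)
  next
    case False
    have c: "Suc p \<in> {1..2*n}" using Suc.prems by auto
    note uc = ucol[OF c]
    define x' where "x' = (\<lambda>k. x k - x (Suc p) * u k (Suc p))"
    have x': "x' \<in> supported_on {1..p}" unfolding supported_on_iff
    proof (intro allI impI)
      fix k assume k: "k \<notin> {1..p}"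
      show "x' k = 0"
      proof (cases "k = Suc p")
        case True then show ?thesis using uc by (simp add: x'_def)
      next
        case False
        then have "k \<notin> {1..Suc p}" using k by auto
        then show ?thesis using Suc.prems(2) uc unfolding x'_def supported_on_def by auto
      qed
    qed
    obtain w' where w': "w' \<in> supported_on {q+1..2*n}"
        "(\<lambda>k. x' k - mvec (2*n) u w' k) \<in> supported_on {1..q}"
      using Suc.IH[OF _ x'] Suc.prems by auto
    define w where "w = (\<lambda>k. w' k + x (Suc p) * ev (Suc p) k)"
    have wS: "w \<in> supported_on {q+1..2*n}"
      using w' False c by (auto simp: w_def supported_on_def ev_def)
    have "mvec (2*n) u w = (\<lambda>i. mvec (2*n) u w' i + x (Suc p) * u i (Suc p))"
      unfolding w_def by (rule mvec_add_ev[OF c])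
    then have "(\<lambda>k. x k - mvec (2*n) u w k) = (\<lambda>k. x' k - mvec (2*n) u w' k)"
      by (auto simp: x'_def)
    then have "(\<lambda>k. x k - mvec (2*n) u w k) \<in> supported_on {1..q}" using w'(2) by simp
    then show ?thesis using wS by blast
  qed
qed

section \<open>The filtration defining the unipotent radical\<close>

definition unitriangular :: "nat \<Rightarrow> matr \<Rightarrow> bool" where
  "unitriangular m u \<longleftrightarrow> (\<forall>c\<in>{1..m}. (\<forall>k. c < k \<longrightarrow> u k c = 0) \<and> u c c = 1)"

lemma unitriangular_column:
  assumes "unitriangular m u" "u \<in> Mats m" "c \<in> {1..m}"
  shows "(\<lambda>k. u k c) \<in> supported_on {1..c}" "u c c = 1"
proof -
  show "u c c = 1" using assms(1,3) unfolding unitriangular_def by blast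
  show "(\<lambda>k. u k c) \<in> supported_on {1..c}" unfolding supported_on_iff
  proof (intro allI impI)
    fix k assume k: "k \<notin> {1..c}"
    show "u k c = 0"
    proof (cases "c < k")
      case True then show ?thesis using assms(1,3) unfolding unitriangular_def by blast
    next
      case False then have "k \<notin> {1..m}" using k assms(3) by auto
      then show ?thesis using assms(2) unfolding Mats_def by auto
    qed
  qed
qed

lemma iso_flagsD:
  assumes "V \<in> iso_flags n \<Theta>" "i \<in> \<Theta>"
  shows "lin_subspace (V i)" "V i \<subseteq> supported_on {1..2*n}" "isotropic n (V i)"
    "\<And>j. j \<in> \<Theta> \<Longrightarrow> i \<le> j \<Longrightarrow> V i \<subseteq> V j"
proof -
  obtain vs where vs: "set vs \<subseteq> Rn (2*n)" "lspan vs = V i"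
    using assms unfolding iso_flags_def subspace_dim_def by blast
  show "lin_subspace (V i)" using lin_subspace_lspan vs by metis
  show "V i \<subseteq> supported_on {1..2*n}"
    using lspan_subset_Rn[OF vs(1)] vs(2) by (simp add: Rn_eq_supported_on)
  show "isotropic n (V i)" "\<And>j. j \<in> \<Theta> \<Longrightarrow> i \<le> j \<Longrightarrow> V i \<subseteq> V j"
    using assms unfolding iso_flags_def by blast+
qed

locale flag_type =
  fixes n :: nat and \<Theta> :: "nat set"
  assumes Theta_sub: "\<Theta> \<subseteq> {1..n}" and Theta_ne: "\<Theta> \<noteq> {}"
begin

lemma finite_Theta: "finite \<Theta>"
  using Theta_sub by (rule finite_subset) simp

lemma finite_filt_idx: "finite (filt_idx n \<Theta>)"
  using finite_Theta unfolding filt_idx_def by auto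

lemma filt_idx_cases:
  "x \<in> filt_idx n \<Theta> \<Longrightarrow> x = 0 \<or> x = 2*n \<or> x \<in> \<Theta> \<or> (\<exists>t\<in>\<Theta>. x = 2*n - t)"
  unfolding filt_idx_def by auto

lemma filt_idx_le: "x \<in> filt_idx n \<Theta> \<Longrightarrow> x \<le> 2*n"
  using Theta_sub unfolding filt_idx_def by auto

lemma diff_in_filt_idx: "t \<in> \<Theta> \<Longrightarrow> 2*n - t \<in> filt_idx n \<Theta>"
  unfolding filt_idx_def by auto

lemma filt_idx_sym:
  assumes "x \<in> filt_idx n \<Theta>"
  shows "2*n - x \<in> filt_idx n \<Theta>"
  using filt_idx_cases[OF assms]
proof (elim disjE)
  assume "\<exists>t\<in>\<Theta>. x = 2*n - t"
  then obtain t where t: "t \<in> \<Theta>" "x = 2*n - t" by auto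
  then have "2*n - x = t" using Theta_sub by auto
  then show ?thesis using t(1) unfolding filt_idx_def by auto
qed (auto simp: filt_idx_def diff_in_filt_idx)

definition filt_pred :: "nat \<Rightarrow> nat" where
  "filt_pred c = Max {x \<in> filt_idx n \<Theta>. x < c}"

lemma filt_pred_props:
  assumes "1 \<le> c"
  shows "filt_pred c \<in> filt_idx n \<Theta>" "filt_pred c < c"
    "\<And>x. x \<in> filt_idx n \<Theta> \<Longrightarrow> x < c \<Longrightarrow> x \<le> filt_pred c"
proof -
  have fin: "finite {x \<in> filt_idx n \<Theta>. x < c}" using finite_filt_idx by auto
  have ne: "0 \<in> {x \<in> filt_idx n \<Theta>. x < c}" using assms unfolding filt_idx_def by auto
  have "filt_pred c \<in> {x \<in> filt_idx n \<Theta>. x < c}"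
    unfolding filt_pred_def by (rule Max_in[OF fin]) (use ne in blast)
  then show "filt_pred c \<in> filt_idx n \<Theta>" "filt_pred c < c" by auto
  show "\<And>x. x \<in> filt_idx n \<Theta> \<Longrightarrow> x < c \<Longrightarrow> x \<le> filt_pred c"
    using Max_ge[OF fin] unfolding filt_pred_def by auto
qed

definition unipotent_columns :: "matr \<Rightarrow> bool" where
  "unipotent_columns u \<longleftrightarrow>
     (\<forall>c\<in>{1..2*n}. \<forall>i. i \<notin> {1..filt_pred c} \<longrightarrow> u i c = (if i = c then 1 else 0))"

lemma unipotent_columns_if_U_Theta:
  assumes "u \<in> U_Theta n \<Theta>"
  shows "unipotent_columns u"
  unfolding unipotent_columns_def
proof (intro ballI allI impI)
  fix c i assume c: "c \<in> {1..2*n}" and i: "i \<notin> {1..filt_pred c}"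
  define k' where "k' = Min {x \<in> filt_idx n \<Theta>. c \<le> x}"
  have fin: "finite {x \<in> filt_idx n \<Theta>. c \<le> x}" using finite_filt_idx by auto
  have ne: "2*n \<in> {x \<in> filt_idx n \<Theta>. c \<le> x}" using c unfolding filt_idx_def by auto
  have "k' \<in> {x \<in> filt_idx n \<Theta>. c \<le> x}"
    unfolding k'_def by (rule Min_in[OF fin]) (use ne in blast)
  then have k': "k' \<in> filt_idx n \<Theta>" "c \<le> k'"
    "\<And>x. x \<in> filt_idx n \<Theta> \<Longrightarrow> c \<le> x \<Longrightarrow> k' \<le> x"
    using Min_le[OF fin] unfolding k'_def by auto
  have p: "filt_pred c \<in> filt_idx n \<Theta>" "filt_pred c < c"
    "\<And>x. x \<in> filt_idx n \<Theta> \<Longrightarrow> x < c \<Longrightarrow> x \<le> filt_pred c"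
    using filt_pred_props c by auto
  have consecutive: "filt_pred c < k' \<and> (\<forall>m\<in>filt_idx n \<Theta>. \<not> (filt_pred c < m \<and> m < k'))"
    using p k' by (metis leD not_le_imp_less order.strict_trans2)
  have "ev c \<in> Estd k'"
    unfolding Estd_eq_supported_on using k' c by (auto intro: ev_in_supported_on)
  then have "vsub (mvec (2*n) u (ev c)) (ev c) \<in> Estd (filt_pred c)"
    using assms filt_pred_props(1) c k'(1) consecutive unfolding U_Theta_def by auto
  then have "u i c - ev c i = 0"
    using i mvec_ev[OF c] unfolding Estd_eq_supported_on supported_on_def vsub_def by auto
  then show "u i c = (if i = c then 1 else 0)" by (auto simp: ev_def)
qed

lemma U_Theta_if_unipotent_columns:
  assumes "u \<in> Sp n" "unipotent_columns u"
  shows "u \<in> U_Theta n \<Theta>"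
  unfolding U_Theta_def
proof (intro CollectI conjI ballI impI assms(1))
  fix k k' v
  assume k: "k \<in> filt_idx n \<Theta>" and k': "k' \<in> filt_idx n \<Theta>"
    and consecutive: "k < k' \<and> (\<forall>m\<in>filt_idx n \<Theta>. \<not> (k < m \<and> m < k'))" and v: "v \<in> Estd k'"
  have k'le: "k' \<le> 2*n" using filt_idx_le[OF k'] .
  have v': "v \<in> supported_on {1..k'}" using v by (simp add: Estd_eq_supported_on)
  show "vsub (mvec (2*n) u v) v \<in> Estd k"
    unfolding Estd_eq_supported_on supported_on_iff
  proof (intro allI impI)
    fix i assume i: "i \<notin> {1..k}"
    have eq: "u i c = (if i = c then 1 else 0)" if "c \<in> {1..k'}" for c
    proof -
      have c: "c \<in> {1..2*n}" using that k'le by auto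
      have "i \<notin> {1..filt_pred c}"
      proof (cases "c \<le> k")
        case True then show ?thesis using i filt_pred_props(2)[of c] c by auto
      next
        case False
        have "filt_pred c = k"
        proof (rule antisym)
          show "k \<le> filt_pred c" using filt_pred_props(3)[of c k] k False c by auto
          show "filt_pred c \<le> k"
            using filt_pred_props(1,2)[of c] c consecutive that
            by (metis atLeastAtMost_iff not_le order.strict_trans2)
        qed
        then show ?thesis using i by simp
      qed
      then show ?thesis using assms(2) c unfolding unipotent_columns_def by auto
    qed
    have "mvec (2*n) u v i = (\<Sum>c\<in>{1..k'}. v c * u i c)"
      using mvec_supported_on[OF v', of "2*n" u] k'le by auto
    also have "\<dots> = (\<Sum>c\<in>{1..k'}. if c = i then v c else 0)"
      by (rule sum.cong) (auto simp: eq)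
    also have "\<dots> = v i" using v' by (auto simp: supported_on_def sum.delta)
    finally show "vsub (mvec (2*n) u v) v i = 0" by (simp add: vsub_def)
  qed
qed

lemma U_Theta_iff: "u \<in> U_Theta n \<Theta> \<longleftrightarrow> u \<in> Sp n \<and> unipotent_columns u"
  using unipotent_columns_if_U_Theta U_Theta_if_unipotent_columns by (auto simp: U_Theta_def)

lemma unipotent_columns_minus_ev:
  "unipotent_columns u \<Longrightarrow> c \<in> {1..2*n} \<Longrightarrow> (\<lambda>i. u i c - ev c i) \<in> supported_on {1..filt_pred c}"
  unfolding unipotent_columns_def supported_on_def ev_def by auto

lemma unitriangular_if_unipotent_columns:
  assumes "unipotent_columns u"
  shows "unitriangular (2*n) u"
  unfolding unitriangular_def
proof
  fix c assume c: "c \<in> {1..2*n}"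
  then have "filt_pred c < c" using filt_pred_props(2) by auto
  then have "u i c = (if i = c then 1 else 0)" if "c \<le> i" for i
    using assms c that unfolding unipotent_columns_def by auto
  then show "(\<forall>k. c < k \<longrightarrow> u k c = 0) \<and> u c c = 1" by auto
qed

lemma direct_sum_tau:
  assumes "V \<in> Cset n \<Theta> (tau \<Theta>)" "i \<in> \<Theta>"
  shows "direct_sum_eq (2*n) (V i) (supported_on {1..2*n-i})"
proof -
  have "i \<le> n" using Theta_sub assms(2) by auto
  have "direct_sum_eq (2*n) (V i) (omega_perp n (tau \<Theta> i))"
    using assms unfolding Cset_def antipodal_def by blast
  then show ?thesis unfolding tau_eq_supported_on[OF assms(2)] omega_perp_initial[OF \<open>i \<le> n\<close>] .
qed

lemma direct_sum_tau_opp: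
  assumes "V \<in> Cset n \<Theta> (tau_opp n \<Theta>)" "i \<in> \<Theta>"
  shows "direct_sum_eq (2*n) (V i) (supported_on {i+1..2*n})"
proof -
  have "i \<le> n" using Theta_sub assms(2) by auto
  have "direct_sum_eq (2*n) (V i) (omega_perp n (tau_opp n \<Theta> i))"
    using assms unfolding Cset_def antipodal_def by blast
  then show ?thesis unfolding tau_opp_eq_supported_on[OF assms(2)] omega_perp_final[OF \<open>i \<le> n\<close>] .
qed

abbreviation tmax :: nat where "tmax \<equiv> Max \<Theta>"

lemma tmax_props: "tmax \<in> \<Theta>" "1 \<le> tmax" "tmax \<le> n" "\<And>t. t \<in> \<Theta> \<Longrightarrow> t \<le> tmax"
proof -
  show "tmax \<in> \<Theta>" using Max_in[OF finite_Theta Theta_ne] .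
  then show "1 \<le> tmax" "tmax \<le> n" using Theta_sub by auto
  show "\<And>t. t \<in> \<Theta> \<Longrightarrow> t \<le> tmax" using Max_ge[OF finite_Theta] by auto
qed

lemma filt_pred_large:
  assumes "c \<in> {2*n - tmax + 1..2*n}"
  shows "2*n - filt_pred c \<in> \<Theta>" "2*n - tmax \<le> filt_pred c" "filt_pred c < c"
    "filt_pred c \<in> filt_idx n \<Theta>"
proof -
  have c1: "1 \<le> c" using assms by auto
  note P = filt_pred_props[OF c1]
  show ge: "2*n - tmax \<le> filt_pred c"
    using P(3)[OF diff_in_filt_idx[OF tmax_props(1)]] assms by auto
  show "filt_pred c < c" "filt_pred c \<in> filt_idx n \<Theta>" using P by auto
  from filt_idx_cases[OF P(1)] show "2*n - filt_pred c \<in> \<Theta>"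
  proof (elim disjE)
    assume "filt_pred c = 0" then show ?thesis using ge tmax_props by auto
  next
    assume "filt_pred c = 2*n" then show ?thesis using P(2) assms by auto
  next
    assume h: "filt_pred c \<in> \<Theta>"
    then have "filt_pred c \<le> tmax" "filt_pred c \<le> n" using tmax_props Theta_sub by auto
    then have "filt_pred c = n" "tmax = n" using ge tmax_props(3) by linarith+
    then show ?thesis using tmax_props by auto
  next
    assume "\<exists>t\<in>\<Theta>. filt_pred c = 2*n - t"
    then obtain t where t: "t \<in> \<Theta>" "filt_pred c = 2*n - t" by auto
    then have "t \<le> 2*n" using Theta_sub by auto
    then show ?thesis using t by auto
  qed
qed

lemma filt_pred_small:
  assumes "c \<in> {1..2*n - tmax}"
  shows "filt_pred c \<le> tmax"
proof -
  have c1: "1 \<le> c" using assms by auto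
  note P = filt_pred_props[OF c1]
  from filt_idx_cases[OF P(1)] show ?thesis
  proof (elim disjE)
    assume "filt_pred c = 2*n" then show ?thesis using P(2) assms by auto
  next
    assume "\<exists>t\<in>\<Theta>. filt_pred c = 2*n - t"
    then obtain t where t: "t \<in> \<Theta>" "filt_pred c = 2*n - t" by auto
    have "t \<le> tmax" using t tmax_props by auto
    then show ?thesis using t P(2) assms by auto
  qed (use tmax_props in auto)
qed

end

section \<open>The unipotent element \<open>u\<^sub>V\<close>\<close>

locale antipodal_flag = flag_type +
  fixes V :: flag
  assumes V_antipodal: "V \<in> Cset n \<Theta> (tau \<Theta>)"
begin

lemma V_iso: "V \<in> iso_flags n \<Theta>"
  using V_antipodal unfolding Cset_def by auto

text \<open>The last \<open>tmax\<close> columns of \<open>u\<^sub>V\<close> are vectors of the flag \<open>V\<close>, normalised against the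
  standard basis; the remaining columns are then forced by the symplectic condition.\<close>

definition flag_column :: "nat \<Rightarrow> vect" where
  "flag_column c =
     (SOME y. y \<in> V (2*n - filt_pred c) \<and> (\<lambda>k. y k - ev c k) \<in> supported_on {1..filt_pred c})"

definition dual_column :: "nat \<Rightarrow> vect" where
  "dual_column c = (SOME y. (\<lambda>k. y k - ev c k) \<in> supported_on {1..filt_pred c} \<and>
      (\<forall>b\<in>{2*n - tmax + 1..2*n}. omega n y (flag_column b) = omega n (ev c) (ev b)))"

definition unip :: matr where
  "unip = (\<lambda>i c. if i \<in> {1..2*n} \<and> c \<in> {1..2*n} then
      (if 2*n - tmax < c then flag_column c i else dual_column c i) else 0)"

lemma flag_column_exists:
  assumes c: "c \<in> {2*n - tmax + 1..2*n}"
  shows "\<exists>y. y \<in> V (2*n - filt_pred c) \<and> (\<lambda>k. y k - ev c k) \<in> supported_on {1..filt_pred c}"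
proof -
  note large = filt_pred_large[OF c]
  have "2*n - (2*n - filt_pred c) = filt_pred c" using large c by auto
  then have ds: "direct_sum_eq (2*n) (V (2*n - filt_pred c)) (supported_on {1..filt_pred c})"
    using direct_sum_tau[OF V_antipodal large(1)] by simp
  have "ev c \<in> Rn (2*n)" using c by (auto simp: Rn_eq_supported_on intro: ev_in_supported_on)
  then obtain a b where ab: "a \<in> V (2*n - filt_pred c)" "b \<in> supported_on {1..filt_pred c}"
      "ev c = (\<lambda>k. a k + b k)"
    using direct_sum_eqD(1)[OF ds] by metis
  have "(\<lambda>k. a k - ev c k) \<in> supported_on {1..filt_pred c}"
    using ab(2) unfolding ab(3) by (auto simp: supported_on_def)
  then show ?thesis using ab(1) by blast
qed

lemma flag_column_props:
  assumes c: "c \<in> {2*n - tmax + 1..2*n}"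
  shows "flag_column c \<in> V (2*n - filt_pred c)"
    "(\<lambda>k. flag_column c k - ev c k) \<in> supported_on {1..filt_pred c}"
    "flag_column c \<in> supported_on {1..c}" "flag_column c c = 1"
proof -
  show "flag_column c \<in> V (2*n - filt_pred c)"
    and minus_ev: "(\<lambda>k. flag_column c k - ev c k) \<in> supported_on {1..filt_pred c}"
    using someI_ex[OF flag_column_exists[OF c]] unfolding flag_column_def by auto
  show "flag_column c \<in> supported_on {1..c}" "flag_column c c = 1"
    using minus_ev_supported_onD[OF minus_ev filt_pred_large(3)[OF c]] by auto
qed

lemma flag_column_in_V:
  assumes i: "i \<in> \<Theta>" and c: "c \<in> {2*n - i + 1..2*n}"
  shows "flag_column c \<in> V i"
proof -
  have "i \<le> tmax" using tmax_props i by auto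
  then have cL: "c \<in> {2*n - tmax + 1..2*n}" using c by auto
  have "2*n - i \<le> filt_pred c" using filt_pred_props(3)[OF _ diff_in_filt_idx[OF i]] c by auto
  then have "2*n - filt_pred c \<le> i" using i Theta_sub by auto
  then have "V (2*n - filt_pred c) \<subseteq> V i"
    using iso_flagsD(4)[OF V_iso filt_pred_large(1)[OF cL] i] by auto
  then show ?thesis using flag_column_props(1)[OF cL] by auto
qed

lemma flag_column_in_V_tmax:
  assumes "c \<in> {2*n - tmax + 1..2*n}"
  shows "flag_column c \<in> V tmax"
  using flag_column_in_V[OF tmax_props(1) assms] .

lemma flag_column_reflected_entry:
  assumes c: "c \<in> {1..2*n - tmax}" and b: "b \<in> {2*n - tmax + 1..2*n}"
    and bc: "b \<le> 2*n - filt_pred c"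
  shows "flag_column b (2*n+1-c) = ev b (2*n+1-c)"
proof -
  have c1: "1 \<le> c" using c by auto
  note large = filt_pred_large[OF b]
  have "filt_pred b < 2*n+1-c"
  proof (rule ccontr)
    assume "\<not> filt_pred b < 2*n+1-c"
    then have "2*n - filt_pred b < c" using c by auto
    then have "2*n - filt_pred b \<le> filt_pred c"
      using filt_pred_props(3)[OF c1 filt_idx_sym[OF large(4)]] by auto
    moreover have "filt_pred b < 2*n - filt_pred c" using large(3) bc by auto
    ultimately show False by auto
  qed
  then have "2*n+1-c \<notin> {1..filt_pred b}" by auto
  then show ?thesis using flag_column_props(2)[OF b] unfolding supported_on_def by auto
qed

lemma dual_column_exists:
  assumes c: "c \<in> {1..2*n - tmax}"
  shows "\<exists>y. (\<lambda>k. y k - ev c k) \<in> supported_on {1..filt_pred c} \<and>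
      (\<forall>b\<in>{2*n - tmax + 1..2*n}. omega n y (flag_column b) = omega n (ev c) (ev b))"
proof -
  let ?q = "filt_pred c"
  have qtm: "?q \<le> tmax" using filt_pred_small[OF c] .
  have qn: "?q \<le> n" using qtm tmax_props by auto
  have cin: "c \<in> {1..2*n}" using c by auto
  have triangular: "flag_column b \<in> supported_on {1..b} \<and> flag_column b b = 1"
    if "b \<in> {2*n+1-?q..2*n}" for b
  proof -
    have "b \<in> {2*n - tmax + 1..2*n}" using that qtm tmax_props(3) by auto
    then show ?thesis using flag_column_props(3,4) by auto
  qed
  obtain z where z: "z \<in> supported_on {1..?q}"
    "\<forall>b\<in>{2*n+1-?q..2*n}.
       omega n z (flag_column b) = omega n (ev c) (ev b) - omega n (ev c) (flag_column b)"
    using omega_triangular_solve[OF qn triangular,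
        of "\<lambda>b. omega n (ev c) (ev b) - omega n (ev c) (flag_column b)"]
    by auto
  define y where "y = (\<lambda>k. ev c k + z k)"
  have "omega n y (flag_column b) = omega n (ev c) (ev b)" if b: "b \<in> {2*n - tmax + 1..2*n}" for b
  proof -
    have oy: "omega n y (flag_column b) =
        omega n (ev c) (flag_column b) + omega n z (flag_column b)"
      unfolding y_def by (rule omega_add_left)
    show ?thesis
    proof (cases "b \<in> {2*n+1-?q..2*n}")
      case True then show ?thesis using oy z(2) by auto
    next
      case False
      then have bq: "b \<le> 2*n - ?q" using b by auto
      have "omega n z (flag_column b) = 0"
        by (rule omega_supported_eq_0[OF z(1) flag_column_props(3)[OF b]]) (use bq in auto)
      moreover have "omega n (ev c) (flag_column b) = omega n (ev c) (ev b)"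
        using flag_column_reflected_entry[OF c b bq] by (simp add: omega_ev_left[OF cin])
      ultimately show ?thesis using oy by simp
    qed
  qed
  moreover have "(\<lambda>k. y k - ev c k) \<in> supported_on {1..?q}" using z(1) by (simp add: y_def)
  ultimately show ?thesis by blast
qed

lemma dual_column_props:
  assumes c: "c \<in> {1..2*n - tmax}"
  shows "(\<lambda>k. dual_column c k - ev c k) \<in> supported_on {1..filt_pred c}"
    "\<And>b. b \<in> {2*n - tmax + 1..2*n} \<Longrightarrow>
       omega n (dual_column c) (flag_column b) = omega n (ev c) (ev b)"
    "dual_column c \<in> supported_on {1..c}" "dual_column c c = 1"
proof -
  show minus_ev: "(\<lambda>k. dual_column c k - ev c k) \<in> supported_on {1..filt_pred c}"
    and "\<And>b. b \<in> {2*n - tmax + 1..2*n} \<Longrightarrow>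
       omega n (dual_column c) (flag_column b) = omega n (ev c) (ev b)"
    using someI_ex[OF dual_column_exists[OF c]] unfolding dual_column_def by auto
  show "dual_column c \<in> supported_on {1..c}" "dual_column c c = 1"
    using minus_ev_supported_onD[OF minus_ev] filt_pred_props(2) c by auto
qed

lemma unip_column:
  assumes c: "c \<in> {1..2*n}"
  shows "(\<lambda>i. unip i c) = (if 2*n - tmax < c then flag_column c else dual_column c)"
proof (cases "2*n - tmax < c")
  case True
  then have "flag_column c \<in> supported_on {1..2*n}"
    using flag_column_props(3) supported_on_mono[of "{1..c}" "{1..2*n}"] c by auto
  then show ?thesis using True c unfolding unip_def by (auto simp: supported_on_def)
next
  case False
  then have "dual_column c \<in> supported_on {1..2*n}"
    using dual_column_props(3) supported_on_mono[of "{1..c}" "{1..2*n}"] c by auto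
  then show ?thesis using False c unfolding unip_def by (auto simp: supported_on_def)
qed

lemma unip_Mats: "unip \<in> Mats (2*n)"
  unfolding Mats_def unip_def by auto

lemma unip_unipotent_columns: "unipotent_columns unip"
  unfolding unipotent_columns_def
proof (intro ballI allI impI)
  fix c i assume c: "c \<in> {1..2*n}" and i: "i \<notin> {1..filt_pred c}"
  have "unip i c = (if 2*n - tmax < c then flag_column c i else dual_column c i)"
    using fun_cong[OF unip_column[OF c], of i] by (simp split: if_splits)
  also have "\<dots> = ev c i"
  proof (cases "2*n - tmax < c")
    case True
    then have "c \<in> {2*n - tmax + 1..2*n}" using c by auto
    then show ?thesis using True flag_column_props(2) i unfolding supported_on_def by auto
  next
    case False
    then have "c \<in> {1..2*n - tmax}" using c by auto
    then show ?thesis using False dual_column_props(1) i unfolding supported_on_def by auto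
  qed
  finally show "unip i c = (if i = c then 1 else 0)" by (simp add: ev_def)
qed

lemma omega_flag_columns:
  assumes i: "i \<in> {2*n - tmax + 1..2*n}" and j: "j \<in> {2*n - tmax + 1..2*n}"
  shows "omega n (flag_column i) (flag_column j) = omega n (ev i) (ev j)"
proof -
  have "omega n (flag_column i) (flag_column j) = 0"
    using iso_flagsD(3)[OF V_iso tmax_props(1)] flag_column_in_V_tmax[OF i]
      flag_column_in_V_tmax[OF j]
    unfolding isotropic_def by blast
  also have "\<dots> = omega n (ev i) (ev j)"
  proof -
    have "i \<in> {1..2*n}" using i by auto
    then show ?thesis using omega_ev_left i j tmax_props(3) by (auto simp: ev_def)
  qed
  finally show ?thesis .
qed

lemma omega_dual_columns:
  assumes i: "i \<in> {1..2*n - tmax}" and j: "j \<in> {1..2*n - tmax}"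
  shows "omega n (dual_column i) (dual_column j) = omega n (ev i) (ev j)"
proof -
  define zi where "zi = (\<lambda>k. dual_column i k - ev i k)"
  define zj where "zj = (\<lambda>k. dual_column j k - ev j k)"
  have zi: "zi \<in> supported_on {1..tmax}"
    using dual_column_props(1)[OF i] filt_pred_small[OF i]
      supported_on_mono[of "{1..filt_pred i}" "{1..tmax}"]
    unfolding zi_def by auto
  have zj: "zj \<in> supported_on {1..tmax}"
    using dual_column_props(1)[OF j] filt_pred_small[OF j]
      supported_on_mono[of "{1..filt_pred j}" "{1..tmax}"]
    unfolding zj_def by auto
  have "omega n (ev i) zj = 0"
    by (rule omega_supported_eq_0[OF ev_in_supported_on[of i "{i}"] zj])
       (use i tmax_props(3) in auto)
  moreover have "omega n zi (ev j) = 0"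
    by (rule omega_supported_eq_0[OF zi ev_in_supported_on[of j "{j}"]])
       (use j tmax_props(3) in auto)
  moreover have "omega n zi zj = 0"
    by (rule omega_supported_eq_0[OF zi zj]) (use tmax_props(3) in auto)
  moreover have "dual_column i = (\<lambda>k. ev i k + zi k)" "dual_column j = (\<lambda>k. ev j k + zj k)"
    by (auto simp: zi_def zj_def)
  ultimately show ?thesis by (simp add: omega_add_left omega_add_right)
qed

lemma unip_Sp: "unip \<in> Sp n"
  unfolding Sp_iff_columns[OF unip_Mats]
proof (intro ballI)
  have cols: "omega n (\<lambda>a. unip a i) (\<lambda>a. unip a j) = omega n (ev i) (ev j)"
    if i: "i \<in> {1..2*n}" and j: "j \<in> {1..2*n}" and ij: "2*n - tmax < i \<Longrightarrow> 2*n - tmax < j"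
    for i j
  proof (cases "2*n - tmax < i")
    case True
    then have "i \<in> {2*n - tmax + 1..2*n}" "j \<in> {2*n - tmax + 1..2*n}" using i j ij by auto
    then show ?thesis using unip_column[OF i] unip_column[OF j] omega_flag_columns by auto
  next
    case False
    then have iS: "i \<in> {1..2*n - tmax}" using i by auto
    show ?thesis
    proof (cases "2*n - tmax < j")
      case True
      then have "j \<in> {2*n - tmax + 1..2*n}" using j by auto
      then show ?thesis
        using unip_column[OF i] unip_column[OF j] False True dual_column_props(2)[OF iS] by simp
    next
      case False
      then have "j \<in> {1..2*n - tmax}" using j by auto
      then show ?thesis
        using unip_column[OF i] unip_column[OF j] \<open>\<not> 2*n - tmax < i\<close> False
          omega_dual_columns[OF iS] by simp
    qed
  qed
  fix i j assume i: "i \<in> {1..2*n}" and j: "j \<in> {1..2*n}"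
  show "omega n (\<lambda>a. unip a i) (\<lambda>a. unip a j) = omega n (ev i) (ev j)"
  proof (cases "2*n - tmax < i \<and> \<not> 2*n - tmax < j")
    case True
    then have "omega n (\<lambda>a. unip a j) (\<lambda>a. unip a i) = omega n (ev j) (ev i)"
      using cols[OF j i] by auto
    then show ?thesis using omega_antisym[of n "\<lambda>a. unip a i"] omega_antisym[of n "ev i"] by simp
  next
    case False then show ?thesis using cols[OF i j] by auto
  qed
qed

lemma unip_image_in_V:
  assumes i: "i \<in> \<Theta>" and w: "w \<in> supported_on {2*n-i+1..2*n}"
  shows "mvec (2*n) unip w \<in> V i"
proof -
  have itm: "i \<le> tmax" using tmax_props(4)[OF i] .
  have "mvec (2*n) unip w = (\<lambda>a. \<Sum>c\<in>{2*n-i+1..2*n}. w c * unip a c)"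
    by (rule mvec_supported_on[OF w]) auto
  also have "\<dots> = (\<lambda>a. \<Sum>c\<in>{2*n-i+1..2*n}. w c * flag_column c a)"
  proof (rule ext, rule sum.cong)
    fix a c assume "c \<in> {2*n-i+1..2*n}"
    then have "2*n - tmax < c" "c \<in> {1..2*n}" using itm by auto
    then show "w c * unip a c = w c * flag_column c a"
      using fun_cong[OF unip_column, of c a] by auto
  qed simp
  also have "\<dots> \<in> V i"
    by (rule lin_subspace_sum[OF iso_flagsD(1)[OF V_iso i]]) (use flag_column_in_V[OF i] in auto)
  finally show ?thesis .
qed

lemma V_subset_unip_image:
  assumes i: "i \<in> \<Theta>"
  shows "V i \<subseteq> mvec (2*n) unip ` supported_on {2*n-i+1..2*n}"
proof
  fix x assume x: "x \<in> V i"
  have "x \<in> supported_on {1..2*n}" using iso_flagsD(2)[OF V_iso i] x by auto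
  moreover have "(\<lambda>k. unip k c) \<in> supported_on {1..c} \<and> unip c c = 1" if "c \<in> {1..2*n}" for c
    using unitriangular_column[OF unitriangular_if_unipotent_columns[OF unip_unipotent_columns]
        unip_Mats that] by auto
  ultimately obtain w where w: "w \<in> supported_on {2*n-i+1..2*n}"
      "(\<lambda>k. x k - mvec (2*n) unip w k) \<in> supported_on {1..2*n-i}"
    using unitriangular_span_fill[of "2*n-i" n unip "2*n" x] by (auto simp: Suc_diff_le)
  have "(\<lambda>k. x k - mvec (2*n) unip w k) \<in> V i"
    by (rule lin_subspace_diff[OF iso_flagsD(1)[OF V_iso i] x unip_image_in_V[OF i w(1)]])
  then have "(\<lambda>k. x k - mvec (2*n) unip w k) = (\<lambda>k. 0)"
    using direct_sum_eqD(2)[OF direct_sum_tau[OF V_antipodal i]] w(2) by blast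
  then have "x = mvec (2*n) unip w" by (auto simp: fun_eq_iff)
  then show "x \<in> mvec (2*n) unip ` supported_on {2*n-i+1..2*n}" using w(1) by auto
qed

lemma act_unip_tau_opp: "act n unip (tau_opp n \<Theta>) = V"
proof
  fix i
  show "act n unip (tau_opp n \<Theta>) i = V i"
  proof (cases "i \<in> \<Theta>")
    case False
    then show ?thesis using V_iso unfolding act_def tau_opp_def iso_flags_def by auto
  next
    case True
    then show ?thesis
      unfolding act_def tau_opp_eq_supported_on[OF True]
      using unip_image_in_V[OF True] V_subset_unip_image[OF True] by blast
  qed
qed

lemma column_in_V_if_act_tau_opp:
  assumes g: "act n g (tau_opp n \<Theta>) = V" and c: "c \<in> {2*n - tmax + 1..2*n}"
  shows "(\<lambda>k. g k c) \<in> V (2*n - filt_pred c)"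
proof -
  note large = filt_pred_large[OF c]
  have cin: "c \<in> {1..2*n}" using c by auto
  have "filt_pred c \<le> 2*n" using large c by auto
  then have "ev c \<in> tau_opp n \<Theta> (2*n - filt_pred c)"
    unfolding tau_opp_eq_supported_on[OF large(1)] using large(3) c
    by (intro ev_in_supported_on) auto
  then have "mvec (2*n) g (ev c) \<in> act n g (tau_opp n \<Theta>) (2*n - filt_pred c)"
    unfolding act_def by auto
  then show ?thesis using g mvec_ev[OF cin] by simp
qed

context
  fixes u1 u2 :: matr
  assumes u1: "u1 \<in> U_Theta n \<Theta>" "act n u1 (tau_opp n \<Theta>) = V"
    and u2: "u2 \<in> U_Theta n \<Theta>" "act n u2 (tau_opp n \<Theta>) = V"
begin

lemma U_Theta_large_columns_eq:
  assumes c: "c \<in> {2*n - tmax + 1..2*n}"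
  shows "(\<lambda>k. u1 k c) = (\<lambda>k. u2 k c)"
proof -
  note large = filt_pred_large[OF c]
  have cin: "c \<in> {1..2*n}" using c by auto
  have fc: "filt_pred c \<le> 2*n" using large c by auto
  have "unipotent_columns u1" "unipotent_columns u2" using u1(1) u2(1) U_Theta_iff by auto
  then have "(\<lambda>k. (u1 k c - ev c k) - (u2 k c - ev c k)) \<in> supported_on {1..filt_pred c}"
    by (intro lin_subspace_diff[OF lin_subspace_supported_on] unipotent_columns_minus_ev cin)
  then have "(\<lambda>k. u1 k c - u2 k c) \<in> supported_on {1..2*n - (2*n - filt_pred c)}" using fc by simp
  moreover have "(\<lambda>k. u1 k c - u2 k c) \<in> V (2*n - filt_pred c)"
    by (rule lin_subspace_diff[OF iso_flagsD(1)[OF V_iso large(1)]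
          column_in_V_if_act_tau_opp[OF u1(2) c] column_in_V_if_act_tau_opp[OF u2(2) c]])
  ultimately have "(\<lambda>k. u1 k c - u2 k c) = (\<lambda>k. 0)"
    using direct_sum_eqD(2)[OF direct_sum_tau[OF V_antipodal large(1)]] by blast
  then show ?thesis by (auto simp: fun_eq_iff)
qed

lemma U_Theta_small_columns_eq:
  assumes c: "c \<in> {1..2*n - tmax}"
  shows "(\<lambda>k. u1 k c) = (\<lambda>k. u2 k c)"
proof -
  have cin: "c \<in> {1..2*n}" using c by auto
  have M: "u1 \<in> Mats (2*n)" "u2 \<in> Mats (2*n)" and S: "u1 \<in> Sp n" "u2 \<in> Sp n"
    using u1(1) u2(1) unfolding U_Theta_def Sp_def by auto
  have C: "unipotent_columns u1" "unipotent_columns u2" using u1(1) u2(1) U_Theta_iff by auto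
  define d where "d = (\<lambda>k. u1 k c - u2 k c)"
  have "(\<lambda>k. (u1 k c - ev c k) - (u2 k c - ev c k)) \<in> supported_on {1..filt_pred c}"
    by (rule lin_subspace_diff[OF lin_subspace_supported_on
          unipotent_columns_minus_ev[OF C(1) cin] unipotent_columns_minus_ev[OF C(2) cin]])
  then have d: "d \<in> supported_on {1..tmax}"
    using supported_on_mono[of "{1..filt_pred c}" "{1..tmax}"] filt_pred_small[OF c]
    by (auto simp: d_def)
  have triangular: "(\<lambda>k. u1 k b) \<in> supported_on {1..b} \<and> u1 b b = 1"
    if "b \<in> {2*n+1-tmax..2*n}" for b
  proof -
    have "b \<in> {1..2*n}" using that tmax_props(3) by auto
    then show ?thesis
      using unitriangular_column[OF unitriangular_if_unipotent_columns[OF C(1)] M(1)] by blast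
  qed
  have orth: "\<forall>b\<in>{2*n+1-tmax..2*n}. omega n d (\<lambda>k. u1 k b) = 0"
  proof
    fix b assume b: "b \<in> {2*n+1-tmax..2*n}"
    then have bL: "b \<in> {2*n - tmax + 1..2*n}" and bin: "b \<in> {1..2*n}" using tmax_props(3) by auto
    have "omega n d (\<lambda>k. u1 k b) =
        omega n (\<lambda>k. u1 k c) (\<lambda>k. u1 k b) - omega n (\<lambda>k. u2 k c) (\<lambda>k. u2 k b)"
      unfolding d_def omega_diff_left using U_Theta_large_columns_eq[OF bL] by simp
    also have "\<dots> = 0"
      using S unfolding Sp_iff_columns[OF M(1)] Sp_iff_columns[OF M(2)] using cin bin by auto
    finally show "omega n d (\<lambda>k. u1 k b) = 0" .
  qed
  have "d = (\<lambda>k. 0)"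
    by (rule omega_triangular_unique[OF tmax_props(3) _ d orth]) (rule triangular)
  then show ?thesis by (auto simp: d_def fun_eq_iff)
qed

lemma U_Theta_act_tau_opp_unique: "u1 = u2"
proof (intro ext)
  fix i c
  show "u1 i c = u2 i c"
  proof (cases "c \<in> {1..2*n}")
    case False then show ?thesis using u1(1) u2(1) unfolding U_Theta_def Sp_def Mats_def by auto
  next
    case True
    then have "c \<in> {2*n - tmax + 1..2*n} \<or> c \<in> {1..2*n - tmax}" by auto
    then show ?thesis using U_Theta_large_columns_eq U_Theta_small_columns_eq by (metis fun_cong)
  qed
qed

end

lemma u_of_eq_unip: "u_of n \<Theta> V = unip"
proof -
  have unip: "unip \<in> U_Theta n \<Theta> \<and> act n unip (tau_opp n \<Theta>) = V"
    using U_Theta_iff unip_Sp unip_unipotent_columns act_unip_tau_opp by auto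
  show ?thesis unfolding u_of_def
    by (rule the_equality[where P="\<lambda>u. u \<in> U_Theta n \<Theta> \<and> act n u (tau_opp n \<Theta>) = V", OF unip])
       (use U_Theta_act_tau_opp_unique unip in blast)
qed

end

section \<open>Inverses of unitriangular symplectic matrices\<close>

lemma mmul_assoc: "mmul m (mmul m A B) C = mmul m A (mmul m B C)"
proof (intro ext)
  fix i j
  have "mmul m (mmul m A B) C i j = (\<Sum>k\<in>{1..m}. \<Sum>l\<in>{1..m}. A i l * B l k * C k j)"
    unfolding mmul_def by (simp add: sum_distrib_right)
  also have "\<dots> = (\<Sum>l\<in>{1..m}. \<Sum>k\<in>{1..m}. A i l * B l k * C k j)"
    by (rule sum.swap)
  also have "\<dots> = mmul m A (mmul m B C) i j"
    unfolding mmul_def by (simp add: sum_distrib_left mult.assoc)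
  finally show "mmul m (mmul m A B) C i j = mmul m A (mmul m B C) i j" .
qed

lemma idm_left: "A \<in> Mats m \<Longrightarrow> mmul m (idm m) A = A"
proof (intro ext)
  fix i j assume A: "A \<in> Mats m"
  have "mmul m (idm m) A i j = (\<Sum>k\<in>{1..m}. if k = i then (if i \<in> {1..m} then A i j else 0) else 0)"
    unfolding mmul_def idm_def by (rule sum.cong) auto
  also have "\<dots> = A i j" using A unfolding Mats_def by (auto simp: sum.delta)
  finally show "mmul m (idm m) A i j = A i j" .
qed

lemma idm_right: "A \<in> Mats m \<Longrightarrow> mmul m A (idm m) = A"
proof (intro ext)
  fix i j assume A: "A \<in> Mats m"
  have "mmul m A (idm m) i j = (\<Sum>k\<in>{1..m}. if k = j then (if j \<in> {1..m} then A i j else 0) else 0)"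
    unfolding mmul_def idm_def by (rule sum.cong) auto
  also have "\<dots> = A i j" using A unfolding Mats_def by (auto simp: sum.delta)
  finally show "mmul m A (idm m) i j = A i j" .
qed

lemma minv_eq:
  assumes "B \<in> Mats m" "mmul m B A = idm m" "mmul m A B = idm m"
  shows "minv m A = B"
  unfolding minv_def
proof (rule the_equality)
  show "B \<in> Mats m \<and> mmul m B A = idm m \<and> mmul m A B = idm m" using assms by auto
next
  fix B' assume B': "B' \<in> Mats m \<and> mmul m B' A = idm m \<and> mmul m A B' = idm m"
  have "B' = mmul m B' (idm m)" using B' idm_right by metis
  also have "\<dots> = mmul m (mmul m B' A) B" using assms(3) by (simp add: mmul_assoc)
  also have "\<dots> = B" using B' assms(1) idm_left by metis
  finally show "B' = B" .
qed

text \<open>The matrix \<open>J\<^sup>-\<^sup>1 u\<^sup>T J\<close>, written out entrywise; by definition of \<open>Sp(2n)\<close> it is a left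
  inverse of every symplectic \<open>u\<close>.\<close>

definition sp_inv :: "nat \<Rightarrow> matr \<Rightarrow> matr" where
  "sp_inv n u = (\<lambda>i j. if i \<in> {1..2*n} \<and> j \<in> {1..2*n} then
      - ((-1)^(2*n+1-i) * (-1)^j) * u (2*n+1-j) (2*n+1-i) else 0)"

lemma sp_inv_Mats: "sp_inv n u \<in> Mats (2*n)"
  unfolding sp_inv_def Mats_def by auto

lemma sp_inv_left:
  assumes uM: "u \<in> Mats (2*n)" and uS: "u \<in> Sp n"
  shows "mmul (2*n) (sp_inv n u) u = idm (2*n)"
proof (intro ext)
  fix i j
  show "mmul (2*n) (sp_inv n u) u i j = idm (2*n) i j"
  proof (cases "i \<in> {1..2*n}")
    case False then show ?thesis unfolding mmul_def sp_inv_def idm_def by auto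
  next
    case True
    define ii where "ii = 2*n+1-i"
    have i': "ii \<in> {1..2*n}" using True by (auto simp: ii_def)
    have "mmul (2*n) (sp_inv n u) u i j =
        (\<Sum>k\<in>{1..2*n}. - ((-1) ^ ii * (-1)^k) * u (2*n+1-k) ii * u k j)"
      unfolding mmul_def sp_inv_def using True by (intro sum.cong) (auto simp: ii_def)
    also have "\<dots> = - ((-1) ^ ii) * (\<Sum>k\<in>{1..2*n}. (-1)^k * u (2*n+1-k) ii * u k j)"
      by (simp add: sum_distrib_left algebra_simps sum_negf)
    also have "(\<Sum>k\<in>{1..2*n}. (-1)^k * u (2*n+1-k) ii * u k j) = omega n (\<lambda>a. u a ii) (\<lambda>a. u a j)"
      by (simp add: omega_explicit')
    also have "\<dots> = omega n (ev ii) (ev j)"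
    proof (cases "j \<in> {1..2*n}")
      case True then show ?thesis using uS unfolding Sp_iff_columns[OF uM] using i' by auto
    next
      case False
      have "(\<lambda>a. u a j) = (\<lambda>a. 0)" using uM False unfolding Mats_def by auto
      moreover have "omega n (ev ii) (ev j) = 0"
      proof -
        have "2*n+1-ii \<in> {1..2*n}" using i' by auto
        then have "ev j (2*n+1-ii) = 0" using False by (auto simp: ev_def)
        then show ?thesis using omega_ev_left[OF i'] by simp
      qed
      ultimately show ?thesis by (simp add: omega_explicit)
    qed
    also have "\<dots> = (-1)^(2*n+1-ii) * ev j (2*n+1-ii)" by (rule omega_ev_left[OF i'])
    also have "2*n+1-ii = i" using True by (auto simp: ii_def)
    finally have "mmul (2*n) (sp_inv n u) u i j = - ((-1) ^ ii) * ((-1)^i * ev j i)" .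
    moreover have "odd (ii + i)" using True by (auto simp: ii_def)
    then have "(-1::real)^ii = - ((-1)^i)" by (rule minus_one_power_odd_sum)
    ultimately have "mmul (2*n) (sp_inv n u) u i j = ((-1)^i * (-1)^i) * ev j i" by simp
    also have "\<dots> = ev j i" by (simp add: power_mult_distrib[symmetric])
    finally show ?thesis using True by (auto simp: ev_def idm_def)
  qed
qed

lemma mmul_unitriangular_eq_0:
  assumes tri: "unitriangular m u"
    and W0: "mmul m W u = (\<lambda>i j. 0)"
  shows "c \<in> {1..m} \<Longrightarrow> W i c = 0"
proof (induction c rule: less_induct)
  case (less c)
  have "0 = mmul m W u i c" using W0 by (simp add: fun_eq_iff)
  also have "\<dots> = (\<Sum>k\<in>{1..m}. if k = c then W i c else 0)"
    unfolding mmul_def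
  proof (rule sum.cong)
    fix k assume k: "k \<in> {1..m}"
    show "W i k * u k c = (if k = c then W i c else 0)"
    proof (cases "k < c")
      case True then show ?thesis using less.IH[of k] k by auto
    next
      case False then show ?thesis using tri less.prems unfolding unitriangular_def by auto
    qed
  qed simp
  also have "\<dots> = W i c" using less.prems by (simp add: sum.delta)
  finally show ?case by simp
qed

lemma sp_inv_right:
  assumes uM: "u \<in> Mats (2*n)" and uS: "u \<in> Sp n"
    and tri: "unitriangular (2*n) u"
  shows "mmul (2*n) u (sp_inv n u) = idm (2*n)"
proof -
  define W where "W = (\<lambda>i j. mmul (2*n) u (sp_inv n u) i j - idm (2*n) i j)"
  have "mmul (2*n) W u =
      (\<lambda>i j. mmul (2*n) (mmul (2*n) u (sp_inv n u)) u i j - mmul (2*n) (idm (2*n)) u i j)"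
    unfolding W_def mmul_def by (auto simp: algebra_simps sum_subtractf)
  also have "mmul (2*n) (mmul (2*n) u (sp_inv n u)) u = u"
    by (simp add: mmul_assoc sp_inv_left[OF uM uS] idm_right[OF uM])
  also have "mmul (2*n) (idm (2*n)) u = u" by (rule idm_left[OF uM])
  finally have W0: "mmul (2*n) W u = (\<lambda>i j. 0)" by simp
  have "W i c = 0" for i c
  proof (cases "c \<in> {1..2*n}")
    case True then show ?thesis using mmul_unitriangular_eq_0[OF tri W0] by blast
  next
    case False then show ?thesis unfolding W_def mmul_def idm_def sp_inv_def by auto
  qed
  then show ?thesis unfolding W_def by (auto simp: fun_eq_iff)
qed

lemma minv_eq_sp_inv:
  assumes uM: "u \<in> Mats (2*n)" and uS: "u \<in> Sp n"
    and tri: "unitriangular (2*n) u"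
  shows "minv (2*n) u = sp_inv n u"
  by (rule minv_eq[OF sp_inv_Mats sp_inv_left[OF uM uS] sp_inv_right[OF uM uS tri]])

lemma sp_inv_unitriangular:
  assumes tri: "unitriangular (2*n) u"
  shows "unitriangular (2*n) (sp_inv n u)"
  unfolding unitriangular_def
proof
  fix c assume c: "c \<in> {1..2*n}"
  have c': "2*n+1-c \<in> {1..2*n}" using c by auto
  have "sp_inv n u k c = 0" if "c < k" for k
  proof (cases "k \<in> {1..2*n}")
    case True
    then have "2*n+1-c > 2*n+1-k" "2*n+1-k \<in> {1..2*n}" using that c by auto
    then have "u (2*n+1-c) (2*n+1-k) = 0" using tri unfolding unitriangular_def by blast
    then show ?thesis unfolding sp_inv_def by simp
  qed (auto simp: sp_inv_def)
  moreover have "sp_inv n u c c = 1"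
  proof -
    have "u (2*n+1-c) (2*n+1-c) = 1" using tri c' unfolding unitriangular_def by blast
    moreover have "(-1::real)^(2*n+1-c) = - ((-1)^c)"
      by (rule minus_one_power_odd_sum) (use c in auto)
    ultimately show ?thesis
      using c unfolding sp_inv_def by (simp add: power_mult_distrib[symmetric])
  qed
  ultimately show "(\<forall>k. c < k \<longrightarrow> sp_inv n u k c = 0) \<and> sp_inv n u c c = 1" by blast
qed

section \<open>Orthogonal projections\<close>

lemma vinner_sym: "vinner m x y = vinner m y x"
  unfolding vinner_def by (simp add: mult.commute)

lemma vinner_diff_left: "vinner m (vsub x y) z = vinner m x z - vinner m y z"
  unfolding vinner_def vsub_def by (simp add: algebra_simps sum_subtractf)

lemma vinner_lin_comb_left:
  "vinner m (lin_comb c vs) y = (\<Sum>j<length vs. c j * vinner m (vs!j) y)"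
  unfolding vinner_def lin_comb_def
  by (simp add: sum_distrib_right sum_distrib_left mult.assoc) (rule sum.swap)

lemma vinner_lin_comb_right:
  "vinner m y (lin_comb c vs) = (\<Sum>j<length vs. c j * vinner m y (vs!j))"
  using vinner_lin_comb_left[of m c vs y] by (simp add: vinner_sym)

lemma vinner_self_eq_0D:
  assumes "vinner m x x = 0" "k \<in> {1..m}"
  shows "x k = 0"
proof -
  have "(\<Sum>k\<in>{1..m}. x k * x k) = 0" using assms unfolding vinner_def by simp
  then have "\<forall>k\<in>{1..m}. x k * x k = 0" by (subst (asm) sum_nonneg_eq_0_iff) auto
  then show ?thesis using assms by auto
qed

definition gram_mat :: "nat \<Rightarrow> vect list \<Rightarrow> real mat" where
  "gram_mat m vs = mat (length vs) (length vs) (\<lambda>(i,j). vinner m (vs!i) (vs!j))"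

lemma det_gram_nonzero:
  assumes R: "set vs \<subseteq> Rn m" and li: "lin_indep vs"
  shows "det (gram_mat m vs) \<noteq> 0"
proof
  let ?d = "length vs"
  have Gc: "gram_mat m vs \<in> carrier_mat ?d ?d" unfolding gram_mat_def by auto
  assume "det (gram_mat m vs) = 0"
  then obtain v where v: "v \<in> carrier_vec ?d" "v \<noteq> 0\<^sub>v ?d" "gram_mat m vs *\<^sub>v v = 0\<^sub>v ?d"
    using det_0_iff_vec_prod_zero[OF Gc] by blast
  define c where "c j = v $ j" for j
  define x where "x = lin_comb c vs"
  have Gv: "(\<Sum>j<?d. vinner m (vs!i) (vs!j) * c j) = 0" if "i < ?d" for i
  proof -
    have "(gram_mat m vs *\<^sub>v v) $ i = 0" using v(3) that by simp
    then show ?thesis using that v(1) unfolding gram_mat_def c_def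
      by (simp add: scalar_prod_def lessThan_atLeast0 mult.commute)
  qed
  have "vinner m x x = (\<Sum>i<?d. c i * vinner m (vs!i) x)"
    unfolding x_def by (rule vinner_lin_comb_left)
  also have "\<dots> = (\<Sum>i<?d. c i * (\<Sum>j<?d. c j * vinner m (vs!i) (vs!j)))"
    unfolding x_def by (simp add: vinner_lin_comb_right)
  also have "\<dots> = 0" using Gv by (simp add: mult.commute)
  finally have xx: "vinner m x x = 0" .
  have xR: "x \<in> Rn m" using lspan_subset_Rn[OF R] unfolding x_def lspan_def by blast
  have "x = vzero"
  proof
    fix k show "x k = vzero k"
    proof (cases "k \<in> {1..m}")
      case True then show ?thesis using vinner_self_eq_0D[OF xx] by (simp add: vzero_def)
    next
      case False then show ?thesis using xR by (auto simp: Rn_def vzero_def)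
    qed
  qed
  then have "\<forall>j<?d. c j = 0" using li unfolding lin_indep_def x_def by blast
  then have "v = 0\<^sub>v ?d" using v(1) by (intro eq_vecI) (auto simp: c_def)
  then show False using v(2) by simp
qed

definition gram_inv :: "nat \<Rightarrow> vect list \<Rightarrow> real mat" where
  "gram_inv m vs = (1 / det (gram_mat m vs)) \<cdot>\<^sub>m adj_mat (gram_mat m vs)"

lemma gram_mult_gram_inv:
  assumes R: "set vs \<subseteq> Rn m" and li: "lin_indep vs" and l: "l < length vs" and j: "j < length vs"
  shows "(\<Sum>i<length vs. vinner m (vs!l) (vs!i) * gram_inv m vs $$ (i,j)) =
    (if l = j then 1 else 0)"
proof -
  let ?d = "length vs" and ?G = "gram_mat m vs"
  have Gc: "?G \<in> carrier_mat ?d ?d" unfolding gram_mat_def by auto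
  have dz: "det ?G \<noteq> 0" using det_gram_nonzero[OF R li] .
  have A: "?G * adj_mat ?G = det ?G \<cdot>\<^sub>m 1\<^sub>m ?d" using adj_mat(2)[OF Gc] .
  have Ac: "adj_mat ?G \<in> carrier_mat ?d ?d" using adj_mat(1)[OF Gc] .
  have "(?G * adj_mat ?G) $$ (l,j) = (\<Sum>i<?d. vinner m (vs!l) (vs!i) * adj_mat ?G $$ (i,j))"
    using Gc Ac l j by (simp add: scalar_prod_def lessThan_atLeast0 gram_mat_def)
  then have eq: "(\<Sum>i<?d. vinner m (vs!l) (vs!i) * adj_mat ?G $$ (i,j)) =
      det ?G * (if l = j then 1 else 0)"
    using A l j by simp
  have "(\<Sum>i<?d. vinner m (vs!l) (vs!i) * gram_inv m vs $$ (i,j)) =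
        (1 / det ?G) * (\<Sum>i<?d. vinner m (vs!l) (vs!i) * adj_mat ?G $$ (i,j))"
    unfolding gram_inv_def using Ac j by (simp add: sum_distrib_left algebra_simps)
  also have "\<dots> = (if l = j then 1 else 0)" using eq dz by simp
  finally show ?thesis .
qed

definition proj_mat :: "nat \<Rightarrow> vect list \<Rightarrow> matr" where
  "proj_mat m vs =
     (\<lambda>a b. \<Sum>i<length vs. \<Sum>j<length vs. (vs!i) a * gram_inv m vs $$ (i,j) * (vs!j) b)"

definition proj_coeff :: "nat \<Rightarrow> vect list \<Rightarrow> vect \<Rightarrow> nat \<Rightarrow> real" where
  "proj_coeff m vs x i = (\<Sum>j<length vs. gram_inv m vs $$ (i,j) * vinner m (vs!j) x)"

lemma mvec_proj_mat: "mvec m (proj_mat m vs) x = lin_comb (proj_coeff m vs x) vs"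
proof
  fix a
  let ?d = "length vs" and ?H = "gram_inv m vs"
  have "mvec m (proj_mat m vs) x a =
      (\<Sum>b\<in>{1..m}. \<Sum>i<?d. \<Sum>j<?d. (vs!i) a * ?H $$ (i,j) * ((vs!j) b * x b))"
    unfolding mvec_def proj_mat_def by (simp add: sum_distrib_right mult.assoc)
  also have "\<dots> = (\<Sum>i<?d. \<Sum>b\<in>{1..m}. \<Sum>j<?d. (vs!i) a * ?H $$ (i,j) * ((vs!j) b * x b))"
    by (rule sum.swap)
  also have "\<dots> = (\<Sum>i<?d. \<Sum>j<?d. \<Sum>b\<in>{1..m}. (vs!i) a * ?H $$ (i,j) * ((vs!j) b * x b))"
    by (rule sum.cong[OF refl], rule sum.swap)
  also have "\<dots> = (\<Sum>i<?d. (vs!i) a * (\<Sum>j<?d. ?H $$ (i,j) * vinner m (vs!j) x))"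
    unfolding vinner_def by (simp add: sum_distrib_left mult.assoc)
  also have "\<dots> = lin_comb (proj_coeff m vs x) vs a"
    unfolding lin_comb_def proj_coeff_def by (simp add: mult.commute)
  finally show "mvec m (proj_mat m vs) x a = lin_comb (proj_coeff m vs x) vs a" .
qed

lemma proj_mat_orthogonal:
  assumes R: "set vs \<subseteq> Rn m" and li: "lin_indep vs" and l: "l < length vs"
  shows "vinner m (vsub x (mvec m (proj_mat m vs) x)) (vs!l) = 0"
proof -
  let ?d = "length vs" and ?H = "gram_inv m vs"
  have "vinner m (mvec m (proj_mat m vs) x) (vs!l) =
      (\<Sum>i<?d. proj_coeff m vs x i * vinner m (vs!i) (vs!l))"
    unfolding mvec_proj_mat by (rule vinner_lin_comb_left)
  also have "\<dots> = (\<Sum>i<?d. \<Sum>j<?d. vinner m (vs!l) (vs!i) * ?H $$ (i,j) * vinner m (vs!j) x)"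
    unfolding proj_coeff_def
    by (simp add: sum_distrib_left sum_distrib_right vinner_sym[of m "vs!_" "vs!l"] algebra_simps)
  also have "\<dots> = (\<Sum>j<?d. \<Sum>i<?d. vinner m (vs!l) (vs!i) * ?H $$ (i,j) * vinner m (vs!j) x)"
    by (rule sum.swap)
  also have "\<dots> = (\<Sum>j<?d. (if l = j then 1 else 0) * vinner m (vs!j) x)"
  proof (rule sum.cong[OF refl])
    fix j assume j: "j \<in> {..<?d}"
    have "(\<Sum>i<?d. vinner m (vs!l) (vs!i) * ?H $$ (i,j) * vinner m (vs!j) x) =
          (\<Sum>i<?d. vinner m (vs!l) (vs!i) * ?H $$ (i,j)) * vinner m (vs!j) x"
      by (simp add: sum_distrib_right)
    then show "(\<Sum>i<?d. vinner m (vs!l) (vs!i) * ?H $$ (i,j) * vinner m (vs!j) x) =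
        (if l = j then 1 else 0) * vinner m (vs!j) x"
      using gram_mult_gram_inv[OF R li l] j by simp
  qed
  also have "\<dots> = (\<Sum>j<?d. if j = l then vinner m (vs!j) x else 0)" by (rule sum.cong) auto
  also have "\<dots> = vinner m (vs!l) x" using l by (simp add: sum.delta)
  finally have h: "vinner m (mvec m (proj_mat m vs) x) (vs!l) = vinner m (vs!l) x" .
  show ?thesis unfolding vinner_diff_left h using vinner_sym[of m x "vs!l"] by simp
qed

definition is_orth_proj :: "nat \<Rightarrow> vect set \<Rightarrow> matr \<Rightarrow> bool" where
  "is_orth_proj m W P \<longleftrightarrow> P \<in> Mats m \<and>
      (\<forall>x\<in>Rn m. mvec m P x \<in> W \<and> (\<forall>w\<in>W. vinner m (vsub x (mvec m P x)) w = 0))"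

lemma projm_eq_The: "projm m W = (THE P. is_orth_proj m W P)"
  unfolding projm_def is_orth_proj_def ..

lemma is_orth_proj_unique:
  assumes W: "lin_subspace W" "W \<subseteq> Rn m"
    and P1: "is_orth_proj m W P1" and P2: "is_orth_proj m W P2"
  shows "P1 = P2"
proof -
  have col: "mvec m P1 x k = mvec m P2 x k" if x: "x \<in> Rn m" and k: "k \<in> {1..m}" for x k
  proof -
    define d where "d = (\<lambda>k. mvec m P1 x k - mvec m P2 x k)"
    have S1: "mvec m P1 x \<in> W" "\<forall>w\<in>W. vinner m (vsub x (mvec m P1 x)) w = 0"
      using P1 x unfolding is_orth_proj_def by blast+
    have S2: "mvec m P2 x \<in> W" "\<forall>w\<in>W. vinner m (vsub x (mvec m P2 x)) w = 0"
      using P2 x unfolding is_orth_proj_def by blast+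
    have dW: "d \<in> W" unfolding d_def by (rule lin_subspace_diff[OF W(1) S1(1) S2(1)])
    have deq: "d = vsub (vsub x (mvec m P2 x)) (vsub x (mvec m P1 x))"
      by (auto simp: d_def vsub_def)
    have "vinner m d d = vinner m (vsub (vsub x (mvec m P2 x)) (vsub x (mvec m P1 x))) d"
      by (subst deq) (rule refl)
    also have "\<dots> = vinner m (vsub x (mvec m P2 x)) d - vinner m (vsub x (mvec m P1 x)) d"
      by (rule vinner_diff_left)
    also have "\<dots> = 0" using S1(2) S2(2) dW by simp
    finally have "d k = 0" by (rule vinner_self_eq_0D[OF _ k])
    then show ?thesis unfolding d_def by simp
  qed
  show ?thesis
  proof (rule ext, rule ext)
    fix a b
    show "P1 a b = P2 a b"
    proof (cases "a \<in> {1..m} \<and> b \<in> {1..m}")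
      case True
      have "ev b \<in> Rn m" using True by (auto simp: Rn_eq_supported_on intro: ev_in_supported_on)
      have "mvec m P1 (ev b) a = mvec m P2 (ev b) a"
        by (rule col) (use True \<open>ev b \<in> Rn m\<close> in auto)
      moreover have "mvec m P1 (ev b) = (\<lambda>i. P1 i b)" using True by (intro mvec_ev) auto
      moreover have "mvec m P2 (ev b) = (\<lambda>i. P2 i b)" using True by (intro mvec_ev) auto
      ultimately show ?thesis by simp
    next
      case False then show ?thesis using P1 P2 unfolding is_orth_proj_def Mats_def by auto
    qed
  qed
qed

lemma is_orth_proj_projm_lspan:
  assumes R: "set vs \<subseteq> Rn m" and li: "lin_indep vs"
  shows "is_orth_proj m (lspan vs) (projm m (lspan vs))"
proof -
  let ?P = "\<lambda>a b. if a \<in> {1..m} \<and> b \<in> {1..m} then proj_mat m vs a b else 0"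
  have eqv: "mvec m ?P x = mvec m (proj_mat m vs) x" if "x \<in> Rn m" for x
  proof
    fix a
    show "mvec m ?P x a = mvec m (proj_mat m vs) x a"
    proof (cases "a \<in> {1..m}")
      case True then show ?thesis unfolding mvec_def by (intro sum.cong) auto
    next
      case False
      have "mvec m (proj_mat m vs) x a = lin_comb (proj_coeff m vs x) vs a"
        by (simp add: mvec_proj_mat)
      also have "\<dots> = 0" using lspan_subset_Rn[OF R] False unfolding lspan_def Rn_def by blast
      finally have h: "mvec m (proj_mat m vs) x a = 0" .
      have "mvec m ?P x a = 0" unfolding mvec_def using False by (intro sum.neutral) auto
      then show ?thesis using h by simp
    qed
  qed
  have S: "is_orth_proj m (lspan vs) ?P"
    unfolding is_orth_proj_def
  proof (intro conjI ballI)
    show "?P \<in> Mats m" unfolding Mats_def by auto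
    fix x assume x: "x \<in> Rn m"
    show "mvec m ?P x \<in> lspan vs" unfolding eqv[OF x] mvec_proj_mat lspan_def by blast
    fix w assume "w \<in> lspan vs"
    then obtain e where w: "w = lin_comb e vs" unfolding lspan_def by auto
    show "vinner m (vsub x (mvec m ?P x)) w = 0"
      unfolding eqv[OF x] w vinner_lin_comb_right using proj_mat_orthogonal[OF R li] by simp
  qed
  have W: "lin_subspace (lspan vs)" "lspan vs \<subseteq> Rn m"
    using lin_subspace_lspan lspan_subset_Rn[OF R] by auto
  have "projm m (lspan vs) = ?P"
    unfolding projm_eq_The
  proof (rule the_equality[where P = "is_orth_proj m (lspan vs)"])
    show "P = ?P" if "is_orth_proj m (lspan vs) P" for P
      using is_orth_proj_unique[OF W that S] .
  qed (rule S)
  then show ?thesis using S by simp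
qed

lemma is_orth_proj_projm_flag:
  assumes "V \<in> iso_flags n \<Theta>" "i \<in> \<Theta>"
  shows "is_orth_proj (2*n) (V i) (projm (2*n) (V i))"
proof -
  obtain vs where vs: "set vs \<subseteq> Rn (2*n)" "lin_indep vs" "lspan vs = V i"
    using assms unfolding iso_flags_def subspace_dim_def by blast
  show ?thesis using is_orth_proj_projm_lspan[OF vs(1,2)] vs(3) by simp
qed

section \<open>A block determinant invariant of isotropic subspaces\<close>

definition top_block :: "nat \<Rightarrow> nat \<Rightarrow> matr \<Rightarrow> real mat" where
  "top_block n k g = mat k k (\<lambda>(i,j). g (i+1) (2*n-k+1+j))"

definition bottom_block :: "nat \<Rightarrow> nat \<Rightarrow> matr \<Rightarrow> real mat" where
  "bottom_block n k g = mat k k (\<lambda>(i,j). g (2*n-k+1+i) (2*n-k+1+j))"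

lemma top_block_carrier: "top_block n k g \<in> carrier_mat k k"
  unfolding top_block_def by auto

lemma bottom_block_carrier: "bottom_block n k g \<in> carrier_mat k k"
  unfolding bottom_block_def by auto

lemma sum_final_segment:
  assumes "k \<le> 2*(n::nat)"
  shows "(\<Sum>c\<in>{2*n-k+1..2*n}. f c) = (\<Sum>l<k. f (2*n-k+1+l))"
  by (rule sum.reindex_bij_witness[of _ "\<lambda>l. 2*n-k+1+l" "\<lambda>c. c - (2*n-k+1)"]) (use assms in auto)

text \<open>The last \<open>k\<close> columns of \<open>P\<close> lie in \<open>W\<close>, so they are the last \<open>k\<close> columns of \<open>g\<close>
  times one \<open>k \<times> k\<close> matrix \<open>Q\<close>; both blocks of \<open>P\<close> are then those of \<open>g\<close> times \<open>Q\<close>.\<close>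

lemma det_blocks_of_image:
  assumes P: "is_orth_proj (2*n) W P" and W: "W = mvec (2*n) g ` supported_on {2*n-k+1..2*n}"
    and k: "k \<le> 2*n"
  shows "\<exists>Q \<in> carrier_mat k k. det (top_block n k P) * det (bottom_block n k P) =
    det (top_block n k g) * det (bottom_block n k g) * (det Q)^2"
proof -
  let ?b = "\<lambda>j. 2*n-k+1+j"
  have ex: "\<forall>j\<in>{..<k}. \<exists>w. w \<in> supported_on {2*n-k+1..2*n} \<and>
      mvec (2*n) P (ev (?b j)) = mvec (2*n) g w"
  proof
    fix j assume j: "j \<in> {..<k}"
    have "ev (?b j) \<in> Rn (2*n)"
      using j k by (auto simp: Rn_eq_supported_on intro: ev_in_supported_on)
    then have "mvec (2*n) P (ev (?b j)) \<in> W" using P unfolding is_orth_proj_def by blast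
    then show "\<exists>w. w \<in> supported_on {2*n-k+1..2*n} \<and> mvec (2*n) P (ev (?b j)) = mvec (2*n) g w"
      unfolding W by blast
  qed
  obtain wf where wf: "\<And>j. j < k \<Longrightarrow>
      wf j \<in> supported_on {2*n-k+1..2*n} \<and> mvec (2*n) P (ev (?b j)) = mvec (2*n) g (wf j)"
    using bchoice[OF ex] by auto
  define Q where "Q = mat k k (\<lambda>(l,j). wf j (?b l))"
  have Qc: "Q \<in> carrier_mat k k" unfolding Q_def by auto
  have entry: "P a (?b j) = (\<Sum>l<k. g a (?b l) * Q $$ (l,j))" if j: "j < k" for a j
  proof -
    have bj: "?b j \<in> {1..2*n}" using j k by auto
    have "P a (?b j) = mvec (2*n) P (ev (?b j)) a" using mvec_ev[OF bj] by simp
    also have "\<dots> = mvec (2*n) g (wf j) a" using wf[OF j] by simp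
    also have "\<dots> = (\<Sum>c\<in>{2*n-k+1..2*n}. wf j c * g a c)"
      using mvec_supported_on[of "wf j" "{2*n-k+1..2*n}" "2*n" g] wf[OF j] by auto
    also have "\<dots> = (\<Sum>l<k. wf j (?b l) * g a (?b l))" by (rule sum_final_segment[OF k])
    also have "\<dots> = (\<Sum>l<k. g a (?b l) * Q $$ (l,j))"
      using j by (intro sum.cong) (auto simp: Q_def)
    finally show ?thesis .
  qed
  have entry': "P a (Suc (2*n-k+j)) = (\<Sum>l = 0..<k. g a (Suc (2*n-k+l)) * Q $$ (l,j))"
    if "j < k" for a j
    using entry[OF that, of a] by (simp add: lessThan_atLeast0)
  have T: "top_block n k P = top_block n k g * Q"
    by (rule eq_matI) (use Qc in \<open>auto simp: top_block_def scalar_prod_def entry'\<close>)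
  have B: "bottom_block n k P = bottom_block n k g * Q"
    by (rule eq_matI) (use Qc in \<open>auto simp: bottom_block_def scalar_prod_def entry'\<close>)
  have "det (top_block n k P) * det (bottom_block n k P) =
      det (top_block n k g) * det (bottom_block n k g) * (det Q)^2"
    unfolding T B det_mult[OF top_block_carrier Qc] det_mult[OF bottom_block_carrier Qc]
    by (simp add: power2_eq_square)
  then show ?thesis using Qc by blast
qed

lemma det_bottom_block_unitriangular:
  assumes tri: "unitriangular (2*n) g" and k: "k \<le> 2*n"
  shows "det (bottom_block n k g) = 1"
proof -
  have diag: "g (2*n-k+1+i) (2*n-k+1+i) = 1" if "i < k" for i
  proof -
    have "2*n-k+1+i \<in> {1..2*n}" using that k by auto
    then show ?thesis using tri unfolding unitriangular_def by blast
  qed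
  have ut: "upper_triangular (bottom_block n k g)"
  proof (rule upper_triangularI)
    fix i j assume ij: "j < i" "i < dim_row (bottom_block n k g)"
    then have "2*n-k+1+j \<in> {1..2*n}" using k by (auto simp: bottom_block_def)
    then show "bottom_block n k g $$ (i,j) = 0"
      using tri ij unfolding unitriangular_def by (auto simp: bottom_block_def)
  qed
  have "det (bottom_block n k g) = prod_list (diag_mat (bottom_block n k g))"
    by (rule det_upper_triangular[OF ut bottom_block_carrier])
  also have "diag_mat (bottom_block n k g) = map (\<lambda>i. 1) [0..<k]"
    unfolding diag_mat_def bottom_block_def using diag by auto
  also have "prod_list (map (\<lambda>i. 1::real) [0..<k]) = 1" by (induction k) auto
  finally show ?thesis .
qed

definition sign_mat :: "nat \<Rightarrow> real mat" where
  "sign_mat k = mat k k (\<lambda>(i,j). if i = j then (-1)^i else 0)"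

definition flip_mat :: "nat \<Rightarrow> real mat" where
  "flip_mat k = mat k k (\<lambda>(i,j). if i + j = k - 1 then 1 else 0)"

lemma sign_mat_carrier: "sign_mat k \<in> carrier_mat k k"
  unfolding sign_mat_def by auto

lemma flip_mat_carrier: "flip_mat k \<in> carrier_mat k k"
  unfolding flip_mat_def by auto

lemma sign_mat_mult:
  assumes "Y \<in> carrier_mat k k"
  shows "sign_mat k * Y = mat k k (\<lambda>(i,j). (-1)^i * Y $$ (i,j))" (is "_ = ?R")
proof (rule eq_matI)
  fix i j assume "i < dim_row ?R" "j < dim_col ?R"
  then have i: "i < k" and j: "j < k" by auto
  have "(sign_mat k * Y) $$ (i,j) = (\<Sum>l\<in>{0..<k}. (if i = l then (-1)^i else 0) * Y $$ (l,j))"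
    using assms i j by (simp add: sign_mat_def scalar_prod_def)
  also have "\<dots> = (\<Sum>l\<in>{0..<k}. if l = i then (-1)^i * Y $$ (l,j) else 0)" by (rule sum.cong) auto
  also have "\<dots> = (-1)^i * Y $$ (i,j)" using i by (simp add: sum.delta)
  finally show "(sign_mat k * Y) $$ (i,j) = ?R $$ (i,j)" using i j by simp
qed (use assms in \<open>auto simp: sign_mat_def\<close>)

lemma mult_sign_mat:
  assumes "Y \<in> carrier_mat k k"
  shows "Y * sign_mat k = mat k k (\<lambda>(i,j). Y $$ (i,j) * (-1)^j)" (is "_ = ?R")
proof (rule eq_matI)
  fix i j assume "i < dim_row ?R" "j < dim_col ?R"
  then have i: "i < k" and j: "j < k" by auto
  have "(Y * sign_mat k) $$ (i,j) = (\<Sum>l\<in>{0..<k}. Y $$ (i,l) * (if l = j then (-1)^l else 0))"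
    using assms i j by (simp add: sign_mat_def scalar_prod_def)
  also have "\<dots> = (\<Sum>l\<in>{0..<k}. if l = j then Y $$ (i,l) * (-1)^j else 0)" by (rule sum.cong) auto
  also have "\<dots> = Y $$ (i,j) * (-1)^j" using j by (simp add: sum.delta)
  finally show "(Y * sign_mat k) $$ (i,j) = ?R $$ (i,j)" using i j by simp
qed (use assms in \<open>auto simp: sign_mat_def\<close>)

lemma flip_mat_mult:
  assumes "Y \<in> carrier_mat k k"
  shows "flip_mat k * Y = mat k k (\<lambda>(i,j). Y $$ (k-1-i, j))" (is "_ = ?R")
proof (rule eq_matI)
  fix i j assume "i < dim_row ?R" "j < dim_col ?R"
  then have i: "i < k" and j: "j < k" by auto
  have "(flip_mat k * Y) $$ (i,j) = (\<Sum>l\<in>{0..<k}. (if i + l = k - 1 then 1 else 0) * Y $$ (l,j))"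
    using assms i j by (simp add: flip_mat_def scalar_prod_def)
  also have "\<dots> = (\<Sum>l\<in>{0..<k}. if l = k-1-i then Y $$ (l,j) else 0)"
    by (rule sum.cong) (use i in auto)
  also have "\<dots> = Y $$ (k-1-i,j)" using i by (simp add: sum.delta)
  finally show "(flip_mat k * Y) $$ (i,j) = ?R $$ (i,j)" using i j by simp
qed (use assms in \<open>auto simp: flip_mat_def\<close>)

lemma mult_flip_mat:
  assumes "Y \<in> carrier_mat k k"
  shows "Y * flip_mat k = mat k k (\<lambda>(i,j). Y $$ (i, k-1-j))" (is "_ = ?R")
proof (rule eq_matI)
  fix i j assume "i < dim_row ?R" "j < dim_col ?R"
  then have i: "i < k" and j: "j < k" by auto
  have "(Y * flip_mat k) $$ (i,j) = (\<Sum>l\<in>{0..<k}. Y $$ (i,l) * (if l + j = k - 1 then 1 else 0))"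
    using assms i j by (simp add: flip_mat_def scalar_prod_def)
  also have "\<dots> = (\<Sum>l\<in>{0..<k}. if l = k-1-j then Y $$ (i,l) else 0)"
    by (rule sum.cong) (use j in auto)
  also have "\<dots> = Y $$ (i,k-1-j)" using j by (simp add: sum.delta)
  finally show "(Y * flip_mat k) $$ (i,j) = ?R $$ (i,j)" using i j by simp
qed (use assms in \<open>auto simp: flip_mat_def\<close>)

lemma det_sign_mat_square: "det (sign_mat k) * det (sign_mat k) = 1"
proof -
  have "sign_mat k * sign_mat k = 1\<^sub>m k"
    unfolding sign_mat_mult[OF sign_mat_carrier]
    by (rule eq_matI) (auto simp: sign_mat_def power_mult_distrib[symmetric])
  then have "det (sign_mat k * sign_mat k) = 1" by simp
  then show ?thesis using det_mult[OF sign_mat_carrier sign_mat_carrier] by simp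
qed

lemma det_flip_mat_square: "det (flip_mat k) * det (flip_mat k) = 1"
proof -
  have "flip_mat k * flip_mat k = 1\<^sub>m k"
    unfolding flip_mat_mult[OF flip_mat_carrier] by (rule eq_matI) (auto simp: flip_mat_def)
  then have "det (flip_mat k * flip_mat k) = 1" by simp
  then show ?thesis using det_mult[OF flip_mat_carrier flip_mat_carrier] by simp
qed


lemma det_signed_antitranspose:
  fixes X :: "real mat"
  assumes X: "X \<in> carrier_mat k k"
  shows "det (mat k k (\<lambda>(i,j). (-1)^i * X $$ (k-1-j, k-1-i) * (-1)^j)) = det X"
proof -
  have Tc: "transpose_mat X \<in> carrier_mat k k" using X by simp
  let ?M = "sign_mat k * (flip_mat k * (transpose_mat X * flip_mat k)) * sign_mat k"
  have "transpose_mat X * flip_mat k = mat k k (\<lambda>(i,j). X $$ (k-1-j, i))"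
    unfolding mult_flip_mat[OF Tc] using X by (auto intro!: eq_matI)
  moreover have "flip_mat k * mat k k (\<lambda>(i,j). X $$ (k-1-j, i)) =
      mat k k (\<lambda>(i,j). X $$ (k-1-j, k-1-i))"
    unfolding flip_mat_mult[OF mat_carrier] by (auto intro!: eq_matI)
  moreover have "sign_mat k * mat k k (\<lambda>(i,j). X $$ (k-1-j, k-1-i)) =
      mat k k (\<lambda>(i,j). (-1)^i * X $$ (k-1-j, k-1-i))"
    unfolding sign_mat_mult[OF mat_carrier] by (auto intro!: eq_matI)
  moreover have "mat k k (\<lambda>(i,j). (-1)^i * X $$ (k-1-j, k-1-i)) * sign_mat k =
      mat k k (\<lambda>(i,j). (-1)^i * X $$ (k-1-j, k-1-i) * (-1)^j)"
    unfolding mult_sign_mat[OF mat_carrier] by (auto intro!: eq_matI)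
  ultimately have M: "?M = mat k k (\<lambda>(i,j). (-1)^i * X $$ (k-1-j, k-1-i) * (-1)^j)" by simp
  have "det ?M = det (sign_mat k) *
      (det (flip_mat k) * (det (transpose_mat X) * det (flip_mat k))) * det (sign_mat k)"
    using sign_mat_carrier flip_mat_carrier Tc
    by (simp add: det_mult[of _ k] mult_carrier_mat[of _ k k _ k])
  also have "\<dots> =
      (det (sign_mat k) * det (sign_mat k)) * (det (flip_mat k) * det (flip_mat k)) * det X"
    using det_transpose[OF X] by (simp add: algebra_simps)
  also have "\<dots> = det X" by (simp add: det_sign_mat_square det_flip_mat_square)
  finally show ?thesis unfolding M .
qed

lemma top_block_sp_inv:
  assumes k: "odd k" "k \<le> 2*n"
  shows "top_block n k (sp_inv n u) =
    (-1) \<cdot>\<^sub>m mat k k (\<lambda>(i,j). (-1)^i * top_block n k u $$ (k-1-j, k-1-i) * (-1)^j)"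
    (is "_ = (-1) \<cdot>\<^sub>m ?M")
proof (rule eq_matI)
  fix i j assume "i < dim_row ((-1) \<cdot>\<^sub>m ?M)" "j < dim_col ((-1) \<cdot>\<^sub>m ?M)"
  then have i: "i < k" and j: "j < k" by auto
  have r1: "i + 1 \<in> {1..2*n}" "2*n-k+1+j \<in> {1..2*n}" using i j k by auto
  have a1: "2*n+1-(i+1) = 2*n - i" and a2: "2*n+1-(2*n-k+1+j) = k - j" using i j k by auto
  have "top_block n k (sp_inv n u) $$ (i,j) =
      - ((-1)^(2*n - i) * (-1)^(2*n-k+1+j)) * u (k - j) (2*n - i)"
  proof -
    have a3: "2*n - (2*n-k+j) = k - j" using j k by auto
    show ?thesis using i j r1 unfolding top_block_def sp_inv_def a1 a2 by (simp add: a3)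
  qed
  also have "(-1::real)^(2*n - i) = (-1)^i" by (rule minus_one_power_even_sum) (use i k in auto)
  also have "(-1::real)^(2*n-k+1+j) = (-1)^j" by (rule minus_one_power_even_sum) (use j k in auto)
  also have "u (k - j) (2*n - i) = top_block n k u $$ (k-1-j, k-1-i)"
  proof -
    have "k - 1 - j + 1 = k - j" "2*n-k+1+(k-1-i) = 2*n - i" "Suc (2*n - Suc i) = 2*n - i"
      using i j k by auto
    then show ?thesis using i j unfolding top_block_def by simp
  qed
  finally show "top_block n k (sp_inv n u) $$ (i,j) = ((-1) \<cdot>\<^sub>m ?M) $$ (i,j)"
    using i j by simp
qed (auto simp: top_block_def)

text \<open>This is where the oddness of \<open>k\<close> enters: negating a \<open>k \<times> k\<close> matrix negates its determinant.\<close>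

lemma det_top_block_sp_inv:
  assumes "odd k" "k \<le> 2*n"
  shows "det (top_block n k (sp_inv n u)) = - det (top_block n k u)"
  unfolding top_block_sp_inv[OF assms] det_smult det_signed_antitranspose[OF top_block_carrier]
  using assms(1) by simp

definition embed_final :: "nat \<Rightarrow> nat \<Rightarrow> real vec \<Rightarrow> vect" where
  "embed_final n k y = (\<lambda>c. if c \<in> {2*n-k+1..2*n} then y $ (c - (2*n-k+1)) else 0)"

lemma embed_final_supported_on: "embed_final n k y \<in> supported_on {2*n-k+1..2*n}"
  unfolding embed_final_def supported_on_def by auto

lemma embed_final_eq_0D:
  assumes "embed_final n k y = (\<lambda>c. 0)" "y \<in> carrier_vec k" "k \<le> 2*n"
  shows "y = 0\<^sub>v k"
proof (rule eq_vecI)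
  fix j assume "j < dim_vec (0\<^sub>v k)"
  then have j: "j < k" by simp
  have "2*n-k+1+j \<in> {2*n-k+1..2*n}" "2*n-k+1+j - (2*n-k+1) = j" using j assms(3) by auto
  then show "y $ j = 0\<^sub>v k $ j"
    using fun_cong[OF assms(1), of "2*n-k+1+j"] j unfolding embed_final_def by simp
qed (use assms(2) in auto)

lemma mvec_embed_final:
  assumes "k \<le> 2*n"
  shows "mvec (2*n) P (embed_final n k y) a = (\<Sum>l<k. P a (2*n-k+1+l) * y $ l)"
proof -
  have "mvec (2*n) P (embed_final n k y) a =
      (\<Sum>c\<in>{2*n-k+1..2*n}. embed_final n k y c * P a c)"
    by (subst mvec_supported_on[OF embed_final_supported_on]) auto
  also have "\<dots> = (\<Sum>l<k. embed_final n k y (2*n-k+1+l) * P a (2*n-k+1+l))"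
    by (rule sum_final_segment[OF assms])
  also have "\<dots> = (\<Sum>l<k. P a (2*n-k+1+l) * y $ l)"
    using assms by (intro sum.cong) (auto simp: embed_final_def)
  finally show ?thesis .
qed

lemma orth_proj_final_eq_0:
  assumes P: "is_orth_proj (2*n) W P" and W: "direct_sum_eq (2*n) W (supported_on {1..2*n-k})"
    and x: "x \<in> supported_on {2*n-k+1..2*n}" and Px: "mvec (2*n) P x = (\<lambda>c. 0)"
  shows "x = (\<lambda>c. 0)"
proof -
  have xR: "x \<in> Rn (2*n)"
    using x supported_on_mono[of "{2*n-k+1..2*n}" "{1..2*n}"] by (auto simp: Rn_eq_supported_on)
  have orth: "vinner (2*n) x w = 0" if "w \<in> W" for w
  proof -
    have "vinner (2*n) (vsub x (mvec (2*n) P x)) w = 0"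
      using P xR that unfolding is_orth_proj_def by blast
    moreover have "vsub x (mvec (2*n) P x) = x" using Px by (auto simp: vsub_def)
    ultimately show ?thesis by simp
  qed
  obtain a b where ab: "a \<in> W" "b \<in> supported_on {1..2*n-k}" "x = (\<lambda>c. a c + b c)"
    using direct_sum_eqD(1)[OF W xR] by blast
  have "vinner (2*n) x x = vinner (2*n) x a + vinner (2*n) x b"
    by (subst (2) ab(3)) (simp add: vinner_def algebra_simps sum.distrib)
  also have "vinner (2*n) x b = 0"
    unfolding vinner_def
  proof (intro sum.neutral ballI)
    fix c assume c: "c \<in> {1..2*n}"
    show "x c * b c = 0"
    proof (cases "c \<le> 2*n-k")
      case True then have "x c = 0" using x unfolding supported_on_def by auto
      then show ?thesis by simp
    next
      case False then have "b c = 0" using ab(2) unfolding supported_on_def by auto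
      then show ?thesis by simp
    qed
  qed
  finally have xx: "vinner (2*n) x x = 0" using orth[OF ab(1)] by simp
  have "x c = 0" for c
    using vinner_self_eq_0D[OF xx, of c] x unfolding supported_on_def by fastforce
  then show ?thesis by auto
qed

text \<open>A kernel vector of either block yields \<open>x\<close> with \<open>P x\<close> in \<open>W\<close> and in a coordinate
  complement of \<open>W\<close>, so \<open>P x = 0\<close>; then \<open>x = 0\<close> by \<open>orth_proj_final_eq_0\<close>.\<close>

lemma det_top_block_orth_proj_nonzero:
  assumes P: "is_orth_proj (2*n) W P" and WR: "W \<subseteq> supported_on {1..2*n}" and k: "k \<le> n"
    and ds1: "direct_sum_eq (2*n) W (supported_on {1..2*n-k})"
    and ds2: "direct_sum_eq (2*n) W (supported_on {k+1..2*n})"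
  shows "det (top_block n k P) \<noteq> 0"
proof
  assume "det (top_block n k P) = 0"
  then obtain y where y: "y \<in> carrier_vec k" "y \<noteq> 0\<^sub>v k" "top_block n k P *\<^sub>v y = 0\<^sub>v k"
    using det_0_iff_vec_prod_zero[OF top_block_carrier] by blast
  let ?x = "embed_final n k y"
  have "?x \<in> Rn (2*n)" using embed_final_supported_on[of n k y]
    supported_on_mono[of "{2*n-k+1..2*n}" "{1..2*n}"] by (auto simp: Rn_eq_supported_on)
  then have PxW: "mvec (2*n) P ?x \<in> W" using P unfolding is_orth_proj_def by blast
  have vanish: "mvec (2*n) P ?x a = 0" if a: "a \<in> {1..k}" for a
  proof -
    have a1: "a - 1 < k" "Suc (a - 1) = a" using a by auto
    have "(top_block n k P *\<^sub>v y) $ (a - 1) = 0" using y(3) a1 by simp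
    then show ?thesis using a1 y(1) k
      by (simp add: mvec_embed_final top_block_def scalar_prod_def lessThan_atLeast0)
  qed
  have PxR: "mvec (2*n) P ?x \<in> supported_on {1..2*n}" using PxW WR by auto
  have "mvec (2*n) P ?x c = 0" if "c \<notin> {k+1..2*n}" for c
    using vanish[of c] PxR that unfolding supported_on_def by (cases "c \<in> {1..k}") auto
  then have "mvec (2*n) P ?x \<in> supported_on {k+1..2*n}" unfolding supported_on_iff by blast
  then have "mvec (2*n) P ?x = (\<lambda>c. 0)" using direct_sum_eqD(2)[OF ds2 PxW] by blast
  then have "?x = (\<lambda>c. 0)" by (rule orth_proj_final_eq_0[OF P ds1 embed_final_supported_on])
  then show False using embed_final_eq_0D y(1,2) k by auto
qed

lemma det_bottom_block_orth_proj_nonzero: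
  assumes P: "is_orth_proj (2*n) W P" and WR: "W \<subseteq> supported_on {1..2*n}" and k: "k \<le> n"
    and ds1: "direct_sum_eq (2*n) W (supported_on {1..2*n-k})"
  shows "det (bottom_block n k P) \<noteq> 0"
proof
  assume "det (bottom_block n k P) = 0"
  then obtain y where y: "y \<in> carrier_vec k" "y \<noteq> 0\<^sub>v k" "bottom_block n k P *\<^sub>v y = 0\<^sub>v k"
    using det_0_iff_vec_prod_zero[OF bottom_block_carrier] by blast
  let ?x = "embed_final n k y"
  have "?x \<in> Rn (2*n)" using embed_final_supported_on[of n k y]
    supported_on_mono[of "{2*n-k+1..2*n}" "{1..2*n}"] by (auto simp: Rn_eq_supported_on)
  then have PxW: "mvec (2*n) P ?x \<in> W" using P unfolding is_orth_proj_def by blast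
  have vanish: "mvec (2*n) P ?x a = 0" if a: "a \<in> {2*n-k+1..2*n}" for a
  proof -
    have a1: "a - (2*n-k+1) < k" "2*n-k+1 + (a - (2*n-k+1)) = a" using a k by auto
    have "(bottom_block n k P *\<^sub>v y) $ (a - (2*n-k+1)) = 0" using y(3) a1 by simp
    then show ?thesis using a1 y(1) k
      by (simp add: mvec_embed_final bottom_block_def scalar_prod_def lessThan_atLeast0)
  qed
  have PxR: "mvec (2*n) P ?x \<in> supported_on {1..2*n}" using PxW WR by auto
  have "mvec (2*n) P ?x c = 0" if "c \<notin> {1..2*n-k}" for c
    using vanish[of c] PxR that unfolding supported_on_def by (cases "c \<in> {2*n-k+1..2*n}") auto
  then have "mvec (2*n) P ?x \<in> supported_on {1..2*n-k}" unfolding supported_on_iff by blast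
  then have "mvec (2*n) P ?x = (\<lambda>c. 0)" using direct_sum_eqD(2)[OF ds1 PxW] by blast
  then have "?x = (\<lambda>c. 0)" by (rule orth_proj_final_eq_0[OF P ds1 embed_final_supported_on])
  then show False using embed_final_eq_0D y(1,2) k by auto
qed

definition flag_invariant :: "nat \<Rightarrow> nat \<Rightarrow> flag \<Rightarrow> real" where
  "flag_invariant n k W =
     det (top_block n k (projm (2*n) (W k))) * det (bottom_block n k (projm (2*n) (W k)))"

lemma (in flag_type) flag_invariant_nonzero:
  assumes k: "k \<in> \<Theta>" and V: "V \<in> Cset n \<Theta> (tau \<Theta>)" "V \<in> Cset n \<Theta> (tau_opp n \<Theta>)"
  shows "flag_invariant n k V \<noteq> 0"
proof -
  have VI: "V \<in> iso_flags n \<Theta>" using V(1) unfolding Cset_def by auto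
  have "k \<le> n" using k Theta_sub by auto
  note hyps = is_orth_proj_projm_flag[OF VI k] iso_flagsD(2)[OF VI k] this direct_sum_tau[OF V(1) k]
  show ?thesis unfolding flag_invariant_def
    using det_top_block_orth_proj_nonzero[OF hyps direct_sum_tau_opp[OF V(2) k]]
      det_bottom_block_orth_proj_nonzero[OF hyps] by simp
qed

lemma (in antipodal_flag) flag_invariant_iota_sign:
  assumes k: "k \<in> \<Theta>" "odd k" and iota_iso: "iota n \<Theta> V \<in> iso_flags n \<Theta>"
  shows "flag_invariant n k V * flag_invariant n k (iota n \<Theta> V) \<le> 0"
proof -
  have k2: "k \<le> 2*n" using k Theta_sub by auto
  have tri: "unitriangular (2*n) unip"
    by (rule unitriangular_if_unipotent_columns[OF unip_unipotent_columns])
  have iota_eq: "iota n \<Theta> V = act n (sp_inv n unip) (tau_opp n \<Theta>)"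
    unfolding iota_def u_of_eq_unip minv_eq_sp_inv[OF unip_Mats unip_Sp tri] ..
  have iota_k: "iota n \<Theta> V k = mvec (2*n) (sp_inv n unip) ` supported_on {2*n-k+1..2*n}"
    using fun_cong[OF iota_eq, of k] unfolding act_def tau_opp_eq_supported_on[OF k(1)] by simp
  have V_k: "V k = mvec (2*n) unip ` supported_on {2*n-k+1..2*n}"
    using fun_cong[OF act_unip_tau_opp, of k] unfolding act_def tau_opp_eq_supported_on[OF k(1)]
    by simp
  obtain Q where Q: "flag_invariant n k V =
      det (top_block n k unip) * det (bottom_block n k unip) * (det Q)^2"
    using det_blocks_of_image[OF is_orth_proj_projm_flag[OF V_iso k(1)] V_k k2]
    unfolding flag_invariant_def by blast
  obtain Q' where Q': "flag_invariant n k (iota n \<Theta> V) =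
      det (top_block n k (sp_inv n unip)) * det (bottom_block n k (sp_inv n unip)) * (det Q')^2"
    using det_blocks_of_image[OF is_orth_proj_projm_flag[OF iota_iso k(1)] iota_k k2]
    unfolding flag_invariant_def by blast
  have "det (bottom_block n k unip) = 1" "det (bottom_block n k (sp_inv n unip)) = 1"
    using det_bottom_block_unitriangular[OF tri k2]
      det_bottom_block_unitriangular[OF sp_inv_unitriangular[OF tri] k2] by auto
  moreover have "det (top_block n k (sp_inv n unip)) = - det (top_block n k unip)"
    by (rule det_top_block_sp_inv[OF k(2) k2])
  ultimately have "flag_invariant n k V * flag_invariant n k (iota n \<Theta> V) =
      - ((det (top_block n k unip) * det Q * det Q')^2)"
    unfolding Q Q' by (simp add: power2_eq_square algebra_simps)
  then show ?thesis by simp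
qed

section \<open>Continuity and the sign argument\<close>

lemma det_mat_expand:
  "det (mat k k (\<lambda>(i,j). e i j)) =
    (\<Sum>p\<in>{p. p permutes {0..<k}}. signof p * (\<Prod>i\<in>{0..<k}. e i (p i)))"
proof -
  have "det (mat k k (\<lambda>(i,j). e i j)) =
      (\<Sum>p\<in>{p. p permutes {0..<k}}. signof p * (\<Prod>i = 0..<k. mat k k (\<lambda>(i,j). e i j) $$ (i, p i)))"
    by (rule det_def') auto
  also have "\<dots> = (\<Sum>p\<in>{p. p permutes {0..<k}}. signof p * (\<Prod>i\<in>{0..<k}. e i (p i)))"
  proof (rule sum.cong[OF refl])
    fix p assume "p \<in> {p. p permutes {0..<k}}"
    then have "i \<in> {0..<k} \<Longrightarrow> p i \<in> {0..<k}" for i using permutes_in_image by auto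
    then show "signof p * (\<Prod>i = 0..<k. mat k k (\<lambda>(i,j). e i j) $$ (i, p i)) =
        signof p * (\<Prod>i\<in>{0..<k}. e i (p i))"
      by (auto intro!: prod.cong)
  qed
  finally show ?thesis .
qed

lemma continuous_map_det:
  assumes "\<And>i j. continuous_map X euclideanreal (\<lambda>W. e W i j)"
  shows "continuous_map X euclideanreal (\<lambda>W. det (mat k k (\<lambda>(i,j). e W i j)))"
  unfolding det_mat_expand
  by (intro continuous_map_sum continuous_map_real_mult_left continuous_map_prod assms)
     (auto intro: finite_permutations)

lemma continuous_map_flag_embed_entry:
  "continuous_map (flag_top n \<Theta>) euclideanreal (\<lambda>W. flag_embed n \<Theta> W k a b)"
proof -
  have "continuous_on UNIV ((\<lambda>v::vect. v b) \<circ> (\<lambda>M::matr. M a) \<circ> (\<lambda>F::nat \<Rightarrow> matr. F k))"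
    by (intro continuous_on_compose continuous_on_subset[OF continuous_on_product_coordinates]) auto
  then have "continuous_map euclidean euclideanreal (\<lambda>F::nat \<Rightarrow> matr. F k a b)"
    by (simp add: o_def)
  from continuous_map_pullback[OF this, of "iso_flags n \<Theta>" "flag_embed n \<Theta>"]
  show ?thesis unfolding flag_top_def o_def .
qed

lemma continuous_map_flag_invariant:
  assumes "k \<in> \<Theta>"
  shows "continuous_map (flag_top n \<Theta>) euclideanreal (flag_invariant n k)"
proof -
  have eq: "flag_invariant n k = (\<lambda>W.
      det (mat k k (\<lambda>(i,j). flag_embed n \<Theta> W k (i+1) (2*n-k+1+j))) *
      det (mat k k (\<lambda>(i,j). flag_embed n \<Theta> W k (2*n-k+1+i) (2*n-k+1+j))))"
    unfolding flag_invariant_def top_block_def bottom_block_def flag_embed_def using assms by auto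
  show ?thesis unfolding eq
    by (intro continuous_map_real_mult continuous_map_det continuous_map_flag_embed_entry)
qed

lemma connected_component_not_invariant_if_sign_flips:
  fixes f :: "'a \<Rightarrow> real"
  assumes K: "K \<in> connected_components_of X"
    and f: "continuous_map X euclideanreal f"
    and nonzero: "\<And>x. x \<in> topspace X \<Longrightarrow> f x \<noteq> 0"
    and flip: "\<And>x. x \<in> topspace X \<Longrightarrow> h x \<in> topspace X \<Longrightarrow> f x * f (h x) \<le> 0"
  shows "h ` K \<noteq> K"
proof
  assume hK: "h ` K = K"
  have KX: "K \<subseteq> topspace X" using connected_components_of_subset[OF K] .
  obtain x where x: "x \<in> K" using nonempty_connected_components_of[OF K] by blast
  then have hx: "h x \<in> K" using hK by blast
  have "is_interval (f ` K)"
    using connectedin_continuous_map_image[OF f connectedin_connected_components_of[OF K]]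
    by (simp add: is_interval_connected_1)
  then have ivl: "\<And>a b. a \<in> f ` K \<Longrightarrow> b \<in> f ` K \<Longrightarrow> a \<le> 0 \<Longrightarrow> 0 \<le> b \<Longrightarrow> 0 \<in> f ` K"
    unfolding is_interval_1 by blast
  have "f x * f (h x) \<le> 0" using flip x hx KX by blast
  then have "0 \<in> f ` K"
    using ivl[of "f x" "f (h x)"] ivl[of "f (h x)" "f x"] x hx by (auto simp: mult_le_0_iff)
  then show False using nonzero KX by auto
qed

theorem mainTheorem11:
  fixes n :: nat and \<Theta> :: "nat set"
  assumes "\<Theta> \<noteq> {}" and "\<Theta> \<subseteq> {1..n}" and "\<exists>k\<in>\<Theta>. odd k"
  shows "Property_I n \<Theta>"
proof -
  have Theta: "flag_type n \<Theta>" by (rule flag_type.intro[OF assms(2,1)])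
  obtain k where k: "k \<in> \<Theta>" "odd k" using assms(3) by blast
  let ?C = "Cset n \<Theta> (tau \<Theta>) \<inter> Cset n \<Theta> (tau_opp n \<Theta>)"
  let ?X = "subtopology (flag_top n \<Theta>) ?C"
  have X: "topspace ?X \<subseteq> ?C \<inter> iso_flags n \<Theta>"
    unfolding flag_top_def by (auto simp: topspace_pullback_topology)
  have sign: "flag_invariant n k W * flag_invariant n k (iota n \<Theta> W) \<le> 0"
    if "W \<in> topspace ?X" "iota n \<Theta> W \<in> topspace ?X" for W
    using antipodal_flag.flag_invariant_iota_sign[OF antipodal_flag.intro[OF Theta
        antipodal_flag_axioms.intro] k] X that by blast
  show ?thesis unfolding Property_I_def
  proof
    fix K assume "K \<in> connected_components_of ?X"
    then show "iota n \<Theta> ` K \<noteq> K"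
    proof (rule connected_component_not_invariant_if_sign_flips)
      show "continuous_map ?X euclideanreal (flag_invariant n k)"
        using continuous_map_from_subtopology[OF continuous_map_flag_invariant[OF k(1)]] .
      show "flag_invariant n k W \<noteq> 0" if "W \<in> topspace ?X" for W
        using flag_type.flag_invariant_nonzero[OF Theta k(1)] X that by blast
    qed (rule sign)
  qed
qed

end
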